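(* Every vertex with in-degree at least $d^{4}$ gets removed or all but $d^4$ of its incoming edges get removed, with high probability (i.e., with probability at least $1-n^{-c}$ for any constant $c\geq 1$).
   Context: Setting: $G$ is a graph with $n$ nodes, arboricity $\lambda=o(n^c)$ for every constant $c>0$, and maximum degree $\Delta=\Omega\left(\left(\max\{\lambda, \log n\}\right)^{20}\right)$. Set $d=\Delta^{1/10}$, so that $d=\Omega(\lambda^2)$ and $d=\Omega(\log^{2} n)$. The following centralized algorithm (for maximal matching, resp. maximal independent set) is run. Partition phase: compute an $H$-partition with out-degree $d$ by greedy peeling: iteratively, for $i\geq 1$, put all remaining nodes with remaining degree at most $d$ into layer $L_i$ and remove them; this yields layers $L_1,\dots,L_\ell$ such that each vertex in $L_i$ has at most $d$ neighbors in $\bigcup_{j\ge i} L_j$. For neighbors $u\in L_i$, $v\in L_j$ with $i<j$, $v$ is a parent of $u$ and $u$ a child of $v$; edges are oriented from child to parent (outgoing from the child, incoming to the parent), and edges within the same layer are unoriented. The in-degree of a vertex is its number of children. Mark-and-propose phase: For matching, every node marks one of its outgoing edges chosen uniformly at random, and then every node proposes one of its incoming marked edges (if any) uniformly at random. For independent set, every node marks itself independently with probability $p=d^{-2}$, and a node is proposed if it is marked and none of its neighbors in the same layer is marked. Selection phase: iteratively, for $i=\ell,\dots,1$, all remaining proposed candidates in layer $i$ are added to the partial solution and removed from the graph. For matching: all remaining proposed edges directed to a node in layer $i$ are added to the matching and both their endpoints are removed. For independent set: all remaining proposed nodes in layer $i$ are added to the independent set and removed along with their neighbors. The lemma is stated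 (and proved) for both the matching and the independent set version of this algorithm; together with the out-degree bound $d$ it implies the remainder graph has maximum degree $O(d^4)$. *)

theory Defs
  imports "HOL-Probability.Probability" "HOL-Library.Landau_Symbols"
begin

text \<open>A graph with n nodes: vertices 0..n-1, edge set a symmetric irreflexive
  relation (each undirected edge {u,v} is stored as both (u,v) and (v,u)).\<close>

definition graph :: "nat \<Rightarrow> (nat \<times> nat) set \<Rightarrow> bool" where
  "graph n E \<longleftrightarrow> E \<subseteq> {..<n} \<times> {..<n} \<and> sym E \<and> (\<forall>v. (v, v) \<notin> E)"

definition nbrs :: "(nat \<times> nat) set \<Rightarrow> nat \<Rightarrow> nat set" where
  "nbrs E v = {u. (v, u) \<in> E}"

definition max_degree :: "nat \<Rightarrow> (nat \<times> nat) set \<Rightarrow> nat" where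
  "max_degree n E = Max ((\<lambda>v. card (nbrs E v)) ` {..<n})"

definition is_cycle :: "(nat \<times> nat) set \<Rightarrow> nat list \<Rightarrow> bool" where
  "is_cycle F xs \<longleftrightarrow> length xs \<ge> 3 \<and> distinct xs \<and>
     (\<forall>i < length xs. (xs ! i, xs ! ((i + 1) mod length xs)) \<in> F)"

definition forest :: "(nat \<times> nat) set \<Rightarrow> bool" where
  "forest F \<longleftrightarrow> sym F \<and> (\<forall>v. (v, v) \<notin> F) \<and> \<not> (\<exists>xs. is_cycle F xs)"

definition arboricity :: "(nat \<times> nat) set \<Rightarrow> nat" where
  "arboricity E = (LEAST k. \<exists>F :: nat \<Rightarrow> (nat \<times> nat) set.
       (\<forall>i<k. forest (F i)) \<and> (\<Union>i<k. F i) = E)"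

definition peel_step :: "(nat \<times> nat) set \<Rightarrow> real \<Rightarrow> nat set \<Rightarrow> nat set" where
  "peel_step E d R = {v \<in> R. real (card (nbrs E v \<inter> R)) \<le> d}"

primrec remaining :: "nat \<Rightarrow> (nat \<times> nat) set \<Rightarrow> real \<Rightarrow> nat \<Rightarrow> nat set" where
  "remaining n E d 0 = {..<n}"
| "remaining n E d (Suc i) = remaining n E d i - peel_step E d (remaining n E d i)"

text \<open>Layer L_(i+1) of the paper is layer_set n E d i (layers are 0-based here).\<close>

definition layer_set :: "nat \<Rightarrow> (nat \<times> nat) set \<Rightarrow> real \<Rightarrow> nat \<Rightarrow> nat set" where
  "layer_set n E d i = peel_step E d (remaining n E d i)"

definition layer :: "nat \<Rightarrow> (nat \<times> nat) set \<Rightarrow> real \<Rightarrow> nat \<Rightarrow> nat" where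
  "layer n E d v = (LEAST i. v \<in> layer_set n E d i)"

definition num_layers :: "nat \<Rightarrow> (nat \<times> nat) set \<Rightarrow> real \<Rightarrow> nat" where
  "num_layers n E d = (LEAST i. remaining n E d i = {})"

definition children :: "nat \<Rightarrow> (nat \<times> nat) set \<Rightarrow> real \<Rightarrow> nat \<Rightarrow> nat set" where
  "children n E d v = {u \<in> nbrs E v. layer n E d u < layer n E d v}"

definition parents :: "nat \<Rightarrow> (nat \<times> nat) set \<Rightarrow> real \<Rightarrow> nat \<Rightarrow> nat set" where
  "parents n E d u = {v \<in> nbrs E u. layer n E d u < layer n E d v}"

definition dpar :: "nat \<Rightarrow> (nat \<times> nat) set \<Rightarrow> real" where
  "dpar n E = real (max_degree n E) powr (1 / 10)"

text \<open>Every node marks one outgoing edge (i.e. one parent) uniformly at random;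
  mk u = Some v means u marked its edge to v.\<close>

definition mark_pmf :: "nat \<Rightarrow> (nat \<times> nat) set \<Rightarrow> real \<Rightarrow> (nat \<Rightarrow> nat option) pmf" where
  "mark_pmf n E d = Pi_pmf {..<n} None (\<lambda>u.
     if parents n E d u = {} then return_pmf None
     else map_pmf Some (pmf_of_set (parents n E d u)))"

text \<open>Every node proposes one of its incoming marked edges uniformly at random;
  pr v = Some u means v proposed the edge from u to v.\<close>

definition propose_pmf :: "nat \<Rightarrow> (nat \<times> nat) set \<Rightarrow> real \<Rightarrow> (nat \<Rightarrow> nat option)
    \<Rightarrow> (nat \<Rightarrow> nat option) pmf" where
  "propose_pmf n E d mk = Pi_pmf {..<n} None (\<lambda>v.
     let C = {u \<in> children n E d v. mk u = Some v} in
     if C = {} then return_pmf None else map_pmf Some (pmf_of_set C))"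

text \<open>Selection step for layer i: R is the set of removed vertices so far.\<close>

definition match_step :: "nat \<Rightarrow> (nat \<times> nat) set \<Rightarrow> real \<Rightarrow> (nat \<Rightarrow> nat option)
    \<Rightarrow> nat \<Rightarrow> nat set \<Rightarrow> nat set" where
  "match_step n E d pr i R = R \<union> {x. \<exists>v u. v < n \<and> layer n E d v = i \<and> pr v = Some u
      \<and> v \<notin> R \<and> u \<notin> R \<and> (x = u \<or> x = v)}"

definition match_removed :: "nat \<Rightarrow> (nat \<times> nat) set \<Rightarrow> real \<Rightarrow> (nat \<Rightarrow> nat option) \<Rightarrow> nat set" where
  "match_removed n E d pr = fold (match_step n E d pr) (rev [0..<num_layers n E d]) {}"

definition alg_match :: "nat \<Rightarrow> (nat \<times> nat) set \<Rightarrow> nat set pmf" where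
  "alg_match n E = (let d = dpar n E in
     mark_pmf n E d \<bind> (\<lambda>mk. propose_pmf n E d mk \<bind> (\<lambda>pr.
     return_pmf (match_removed n E d pr))))"

definition mis_mark_pmf :: "nat \<Rightarrow> real \<Rightarrow> (nat \<Rightarrow> bool) pmf" where
  "mis_mark_pmf n p = Pi_pmf {..<n} False (\<lambda>_. bernoulli_pmf p)"

definition mis_proposed :: "nat \<Rightarrow> (nat \<times> nat) set \<Rightarrow> real \<Rightarrow> (nat \<Rightarrow> bool) \<Rightarrow> nat \<Rightarrow> bool" where
  "mis_proposed n E d mk v \<longleftrightarrow> mk v \<and>
     (\<forall>u \<in> nbrs E v. layer n E d u = layer n E d v \<longrightarrow> \<not> mk u)"

definition mis_step :: "nat \<Rightarrow> (nat \<times> nat) set \<Rightarrow> real \<Rightarrow> (nat \<Rightarrow> bool)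
    \<Rightarrow> nat \<Rightarrow> nat set \<Rightarrow> nat set" where
  "mis_step n E d mk i R = (let S = {v. v < n \<and> layer n E d v = i \<and> mis_proposed n E d mk v \<and> v \<notin> R}
     in R \<union> S \<union> (\<Union>v\<in>S. nbrs E v))"

definition mis_removed :: "nat \<Rightarrow> (nat \<times> nat) set \<Rightarrow> real \<Rightarrow> (nat \<Rightarrow> bool) \<Rightarrow> nat set" where
  "mis_removed n E d mk = fold (mis_step n E d mk) (rev [0..<num_layers n E d]) {}"

definition alg_mis :: "nat \<Rightarrow> (nat \<times> nat) set \<Rightarrow> nat set pmf" where
  "alg_mis n E = (let d = dpar n E in
     map_pmf (mis_removed n E d) (mis_mark_pmf n (1 / d ^ 2)))"

text \<open>Every vertex with in-degree at least d^4 is removed, or all but at most d^4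
  of its incoming edges (edges from children) are removed, i.e. at most d^4 of
  its children survive. R is the set of removed vertices.\<close>

definition good_outcome :: "nat \<Rightarrow> (nat \<times> nat) set \<Rightarrow> nat set \<Rightarrow> bool" where
  "good_outcome n E R \<longleftrightarrow> (let d = dpar n E in
     \<forall>v < n. real (card (children n E d v)) \<ge> d ^ 4 \<longrightarrow>
        v \<in> R \<or> real (card {u \<in> children n E d v. u \<notin> R}) \<le> d ^ 4)"

end

(*
  Matching: a vertex v with at least d^4 children is proposed unless none of its children marks
  the edge to v. Every child has at most d parents, so it marks v with probability at least 1/d,
  independently of the others; this fails with probability at most (1 - 1/d)^(d^4) <= exp (-d^3).
  A proposed vertex is always matched, as the child it proposed can only be matched along the
  edge it marked.

  Independent set: if v survives, none of its surviving children was proposed, for v would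
  then have been removed as their neighbour. Inside a layer all degrees are at most d, so the
  surviving children of v there contain an independent set of a 1/(d + 1) fraction of them, and
  the probability that none of these is proposed decays exponentially in their number. The marks
  of a layer are independent of everything decided in the layers above it, so these bounds
  multiply over the layers, giving exp (-d/4) for more than d^4 survivors.

  A union bound over the n vertices together with d >= 4 (c + 1) ln n yields the failure
  probability n^(-c). The peeling never gets stuck because every subgraph of a graph of
  arboricity lambda has a vertex of degree at most 2 lambda, and d >= 2 lambda.
*)

theory Submission
  imports Defs
begin

section \<open>Graphs of bounded arboricity are degenerate\<close>

definition simple_path :: "(nat \<times> nat) set \<Rightarrow> nat list \<Rightarrow> bool" where
  "simple_path F xs \<longleftrightarrow> xs \<noteq> [] \<and> distinct xs \<and> (\<forall>i. Suc i < length xs \<longrightarrow> (xs ! i, xs ! Suc i) \<in> F)"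

lemma simple_path_snoc:
  assumes "simple_path F xs" "u \<notin> set xs" "(last xs, u) \<in> F"
  shows "simple_path F (xs @ [u])"
  unfolding simple_path_def
proof (intro conjI allI impI)
  show "xs @ [u] \<noteq> []" by simp
  show "distinct (xs @ [u])" using assms unfolding simple_path_def by simp
  fix i assume i: "Suc i < length (xs @ [u])"
  show "((xs @ [u]) ! i, (xs @ [u]) ! Suc i) \<in> F"
  proof (cases "Suc i < length xs")
    case True
    then show ?thesis using assms(1) unfolding simple_path_def by (simp add: nth_append)
  next
    case False
    then have "i = length xs - 1" using i by simp
    then show ?thesis using assms(1,3) unfolding simple_path_def
      by (simp add: nth_append last_conv_nth)
  qed
qed

lemma simple_path_back_edge_cycle:
  assumes xs: "simple_path F xs" and i: "i + 3 \<le> length xs" and closing: "(last xs, xs ! i) \<in> F"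
  shows "is_cycle F (drop i xs)"
  unfolding is_cycle_def
proof (intro conjI allI impI)
  show "3 \<le> length (drop i xs)" using i by simp
  show "distinct (drop i xs)" using xs unfolding simple_path_def by simp
  fix k assume k: "k < length (drop i xs)"
  show "(drop i xs ! k, drop i xs ! ((k + 1) mod length (drop i xs))) \<in> F"
  proof (cases "k + 1 < length (drop i xs)")
    case True
    then show ?thesis using xs unfolding simple_path_def by auto
  next
    case False
    then have "k + 1 = length (drop i xs)" using k by simp
    moreover have "last xs = xs ! (i + k)"
    proof -
      have "xs \<noteq> []" "i + k = length xs - 1" using i calculation by auto
      then show ?thesis by (simp add: last_conv_nth)
    qed
    ultimately show ?thesis using closing i by simp
  qed
qed

lemma maximal_simple_path_exists:
  assumes "finite R" "r \<in> R"
  obtains xs where "simple_path F xs" "set xs \<subseteq> R"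
    "\<And>ys. simple_path F ys \<Longrightarrow> set ys \<subseteq> R \<Longrightarrow> length ys \<le> length xs"
proof -
  define P where "P = (\<lambda>xs. simple_path F xs \<and> set xs \<subseteq> R)"
  have "P [r]" using assms(2) unfolding P_def simple_path_def by simp
  moreover have "length ys < card R + 1" if "P ys" for ys
  proof -
    have "distinct ys" "set ys \<subseteq> R" using that unfolding P_def simple_path_def by auto
    then show ?thesis using assms(1) by (metis card_mono distinct_card le_imp_less_Suc Suc_eq_plus1)
  qed
  ultimately obtain xs where "P xs" "\<forall>ys. P ys \<longrightarrow> length ys \<le> length xs"
    using ex_has_greatest_nat[of P "[r]" length "card R + 1"] by blast
  then show ?thesis using that unfolding P_def by blast
qed

text \<open>The last vertex of a longest path has all its neighbours on the path, and any neighbour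
  other than its predecessor would close a cycle.\<close>

lemma forest_low_degree_vertex:
  assumes F: "forest F" and fin: "finite R" and ne: "R \<noteq> {}"
  shows "\<exists>v\<in>R. card {u\<in>R. (v, u) \<in> F} \<le> 1"
proof (rule ccontr)
  assume contra: "\<not> ?thesis"
  obtain r where "r \<in> R" using ne by auto
  then obtain xs where xs: "simple_path F xs" "set xs \<subseteq> R"
    and longest: "\<And>ys. simple_path F ys \<Longrightarrow> set ys \<subseteq> R \<Longrightarrow> length ys \<le> length xs"
    using maximal_simple_path_exists[OF fin] by blast
  define v where "v = last xs"
  define m where "m = length xs"
  have "xs \<noteq> []" using xs(1) unfolding simple_path_def by simp
  then have vR: "v \<in> R" and v_nth: "v = xs ! (m - 1)"
    using xs(2) unfolding v_def m_def by (auto simp: last_conv_nth Suc_leI)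
  have on_path: "\<exists>i<m - 1. xs ! i = u" if "u \<in> R" "(v, u) \<in> F" for u
  proof -
    have "u \<in> set xs"
      using longest[OF simple_path_snoc[OF xs(1)]] xs(2) that unfolding v_def by fastforce
    then obtain i where i: "i < m" "xs ! i = u" unfolding m_def by (auto simp: in_set_conv_nth)
    have "u \<noteq> v" using that(2) F unfolding forest_def by auto
    then have "i \<noteq> m - 1" using i(2) v_nth by auto
    then have "i < m - 1" using i(1) by simp
    then show ?thesis using i(2) by blast
  qed
  have "2 \<le> card {u\<in>R. (v, u) \<in> F}" using contra vR by (auto simp: not_le)
  then obtain A where "A \<subseteq> {u\<in>R. (v, u) \<in> F}" "card A = 2"
    by (meson obtain_subset_with_card_n)
  then obtain u1 u2 where u12: "u1 \<in> R" "(v, u1) \<in> F" "u2 \<in> R" "(v, u2) \<in> F" "u1 \<noteq> u2"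
    by (auto simp: card_2_iff)
  obtain i1 i2 where i12: "i1 < m - 1" "i2 < m - 1" "xs ! i1 = u1" "xs ! i2 = u2"
    using on_path u12 by metis
  then have "i1 \<noteq> i2" using u12(5) by auto
  then obtain i where i: "i + 3 \<le> m" "(v, xs ! i) \<in> F"
  proof (cases "i1 < i2")
    case True then show ?thesis using that[of i1] i12 u12 by simp
  next
    case False then show ?thesis using that[of i2] i12 u12 \<open>i1 \<noteq> i2\<close> by simp
  qed
  then have "is_cycle F (drop i xs)"
    using simple_path_back_edge_cycle[OF xs(1)] unfolding v_def m_def by blast
  then show False using F unfolding forest_def by blast
qed

lemma card_forest_edges_le:
  assumes F: "forest F" and fin: "finite R"
  shows "card (F \<inter> (R \<times> R)) \<le> 2 * (card R - 1)"
  using fin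
proof (induct "card R" arbitrary: R rule: less_induct)
  case less
  show ?case
  proof (cases "R = {}")
    case True then show ?thesis by simp
  next
    case False
    obtain v where vR: "v \<in> R" and leaf: "card {u\<in>R. (v, u) \<in> F} \<le> 1"
      using forest_low_degree_vertex[OF F less.prems False] by blast
    define R' where "R' = R - {v}"
    define Nv where "Nv = {u\<in>R. (v, u) \<in> F}"
    have irr: "\<forall>x. (x, x) \<notin> F" and sym: "sym F" using F unfolding forest_def by auto
    have finR': "finite R'" using less.prems unfolding R'_def by simp
    have cR': "card R' = card R - 1" unfolding R'_def using vR less.prems by simp
    have "card R > 0" using vR less.prems card_gt_0_iff by blast
    then have IH: "card (F \<inter> (R' \<times> R')) \<le> 2 * (card R' - 1)"
      using less.hyps[of R'] finR' cR' by simp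
    have "F \<inter> (R \<times> R) \<subseteq> (F \<inter> (R' \<times> R')) \<union> ({v} \<times> Nv) \<union> (Nv \<times> {v})"
      unfolding R'_def Nv_def using sym by (auto dest: symD)
    moreover have "finite Nv" unfolding Nv_def using less.prems by simp
    ultimately have "card (F \<inter> (R \<times> R)) \<le> card ((F \<inter> (R' \<times> R')) \<union> ({v} \<times> Nv) \<union> (Nv \<times> {v}))"
      using finR' by (intro card_mono) auto
    also have "\<dots> \<le> card (F \<inter> (R' \<times> R')) + card ({v} \<times> Nv) + card (Nv \<times> {v})"
      by (metis (no_types) card_Un_le add_le_mono order_trans le_refl)
    also have "\<dots> \<le> card (F \<inter> (R' \<times> R')) + 2"
      using leaf unfolding Nv_def[symmetric] by (simp add: card_cartesian_product)
    finally have step: "card (F \<inter> (R \<times> R)) \<le> card (F \<inter> (R' \<times> R')) + 2" .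
    show ?thesis
    proof (cases "R' = {}")
      case True
      then have "F \<inter> (R \<times> R) = {}" using irr vR unfolding R'_def by auto
      then show ?thesis by simp
    next
      case False
      then have "card R' \<ge> 1" using finR' by (simp add: Suc_leI card_gt_0_iff)
      then show ?thesis using step IH cR' by linarith
    qed
  qed
qed

text \<open>Decomposing into single-edge forests shows that the least in the definition of
  arboricity is attained.\<close>

lemma arboricity_decomposition:
  assumes "graph n E"
  obtains F where "\<forall>i<arboricity E. forest (F i)" "(\<Union>i<arboricity E. F i) = E"
proof -
  have finE: "finite E" using assms unfolding graph_def by (meson finite_SigmaI finite_lessThan finite_subset)
  obtain es where es: "set es = E" using finite_list[OF finE] by blast
  define F where "F = (\<lambda>i. {es ! i, prod.swap (es ! i)})"
  have symE: "sym E" and irrE: "\<forall>v. (v, v) \<notin> E" using assms unfolding graph_def by auto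
  have "forest (F i)" if i: "i < length es" for i
  proof -
    obtain a b where ab: "es ! i = (a, b)" by (cases "es ! i")
    have "(a, b) \<in> E" using ab i es nth_mem by metis
    then have aneb: "a \<noteq> b" using irrE by auto
    have Fi: "F i = {(a, b), (b, a)}" unfolding F_def ab by simp
    have "\<not> is_cycle (F i) xs" for xs
    proof
      assume c: "is_cycle (F i) xs"
      have "set xs \<subseteq> {a, b}"
      proof
        fix x assume "x \<in> set xs"
        then obtain k where "k < length xs" "xs ! k = x" by (auto simp: in_set_conv_nth)
        then have "(x, xs ! ((k + 1) mod length xs)) \<in> F i" using c unfolding is_cycle_def by auto
        then show "x \<in> {a, b}" unfolding Fi by auto
      qed
      then have "card (set xs) \<le> 2" by (metis card_2_iff card_mono finite.emptyI finite.insertI aneb)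
      moreover have "card (set xs) = length xs" "length xs \<ge> 3"
        using c unfolding is_cycle_def by (auto simp: distinct_card)
      ultimately show False by simp
    qed
    then show ?thesis unfolding forest_def Fi using aneb by (auto simp: sym_def)
  qed
  moreover have "(\<Union>i<length es. F i) = E"
  proof
    show "(\<Union>i<length es. F i) \<subseteq> E" unfolding F_def using es symE
      by (auto simp: sym_def) (metis nth_mem prod.collapse swap_simp)
    show "E \<subseteq> (\<Union>i<length es. F i)" unfolding F_def using es by (force simp: in_set_conv_nth)
  qed
  ultimately have "\<exists>(k::nat) F. (\<forall>i<k. forest (F i)) \<and> (\<Union>i<k. F i) = E" by blast
  from LeastI_ex[OF this] show ?thesis using that unfolding arboricity_def by blast
qed

lemma low_degree_vertex_exists:
  assumes G: "graph n E" and R: "finite R" "R \<noteq> {}"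
  shows "\<exists>v\<in>R. card (nbrs E v \<inter> R) \<le> 2 * arboricity E"
proof (rule ccontr)
  assume contra: "\<not> ?thesis"
  define k where "k = arboricity E"
  obtain F where F: "\<forall>i<k. forest (F i)" "(\<Union>i<k. F i) = E"
    using arboricity_decomposition[OF G] unfolding k_def by blast
  have "E \<inter> (R \<times> R) = Sigma R (\<lambda>v. nbrs E v \<inter> R)" unfolding nbrs_def by auto
  then have "card (E \<inter> (R \<times> R)) = (\<Sum>v\<in>R. card (nbrs E v \<inter> R))"
    using R by (simp add: card_SigmaI)
  also have "\<dots> \<ge> (\<Sum>v\<in>R. 2 * k + 1)"
    using contra unfolding k_def by (intro sum_mono) (simp add: not_le Suc_le_eq)
  finally have lower: "card R * (2 * k + 1) \<le> card (E \<inter> (R \<times> R))" by simp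
  have "card (E \<inter> (R \<times> R)) = card (\<Union>i<k. F i \<inter> (R \<times> R))" using F(2) by (metis UN_extend_simps(4))
  also have "\<dots> \<le> (\<Sum>i<k. card (F i \<inter> (R \<times> R)))" by (rule card_UN_le) simp
  also have "\<dots> \<le> (\<Sum>i<k. 2 * (card R - 1))"
    using F(1) R(1) by (intro sum_mono card_forest_edges_le) auto
  finally have "card R * (2 * k + 1) \<le> k * (2 * (card R - 1))" using lower by simp
  moreover have "card R \<ge> 1" using R by (simp add: Suc_leI card_gt_0_iff)
  ultimately show False by (cases "card R") (simp_all add: algebra_simps)
qed

section \<open>The H-partition\<close>

lemma nat_step_exists:
  assumes "P (0::nat)" "\<not> P k"
  shows "\<exists>i<k. P i \<and> \<not> P (Suc i)"
  using assms by (induction k) (auto intro: less_SucI)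

locale peeling =
  fixes n :: nat and E :: "(nat \<times> nat) set" and d :: real
  assumes G: "graph n E"
    and peel_nonempty: "\<And>R. R \<subseteq> {..<n} \<Longrightarrow> R \<noteq> {} \<Longrightarrow> peel_step E d R \<noteq> {}"
begin

abbreviation "rem \<equiv> remaining n E d"
abbreviation "ls \<equiv> layer_set n E d"
abbreviation "lay \<equiv> layer n E d"
abbreviation "L \<equiv> num_layers n E d"

lemma E_sub: "E \<subseteq> {..<n} \<times> {..<n}" using G unfolding graph_def by auto

lemma nbrs_sub: "nbrs E v \<subseteq> {..<n}" using E_sub unfolding nbrs_def by auto
lemma finite_nbrs[simp]: "finite (nbrs E v)" by (rule finite_subset[OF nbrs_sub]) simp
lemma nbrs_sym: "u \<in> nbrs E v \<longleftrightarrow> v \<in> nbrs E u" using G unfolding graph_def nbrs_def by (auto dest: symD)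
lemma nbrs_irrefl: "v \<notin> nbrs E v" using G unfolding graph_def nbrs_def by auto

lemma rem_Suc: "rem (Suc i) = rem i - ls i" by (simp add: layer_set_def)

lemma ls_sub: "ls i \<subseteq> rem i" unfolding layer_set_def peel_step_def by auto

lemma rem_sub: "rem i \<subseteq> {..<n}"
  by (induction i) auto

lemma rem_antimono: "i \<le> j \<Longrightarrow> rem j \<subseteq> rem i"
  by (induction j) (auto simp: le_Suc_eq)

lemma finite_rem[simp]: "finite (rem i)" using rem_sub finite_subset by blast
lemma finite_ls[simp]: "finite (ls i)" using ls_sub finite_subset finite_rem by blast

lemma card_rem: "rem i \<noteq> {} \<Longrightarrow> card (rem i) + i \<le> n"
proof (induction i)
  case 0 then show ?case by simp
next
  case (Suc i)
  have ne: "rem i \<noteq> {}" using Suc.prems rem_antimono[of i "Suc i"] by auto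
  have "ls i \<noteq> {}" using peel_nonempty[OF rem_sub ne] unfolding layer_set_def by simp
  then have "rem i - ls i \<subset> rem i" using ls_sub by blast
  then have "card (rem (Suc i)) < card (rem i)" unfolding rem_Suc by (simp add: psubset_card_mono)
  then show ?case using Suc.IH[OF ne] by simp
qed

lemma rem_n: "rem n = {}"
  using card_rem[of n] card_0_eq[OF finite_rem] by force

lemma rem_L: "rem L = {}"
  unfolding num_layers_def using rem_n by (rule LeastI)

lemma ls_disjoint: "v \<in> ls i \<Longrightarrow> v \<in> ls j \<Longrightarrow> i = j"
proof (rule ccontr)
  assume a: "v \<in> ls i" "v \<in> ls j" "i \<noteq> j"
  have False if "v \<in> ls i" "v \<in> ls j" "i < j" for i j
  proof -
    have "v \<in> rem (Suc i)" using that ls_sub rem_antimono[of "Suc i" j] by fastforce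
    then show False using that rem_Suc by auto
  qed
  then show False using a by (metis linorder_neqE_nat)
qed

lemma lay_eq: "v \<in> ls i \<Longrightarrow> lay v = i"
  unfolding layer_def using ls_disjoint by (intro Least_equality) auto

lemma in_ls_lay: "v < n \<Longrightarrow> v \<in> ls (lay v) \<and> lay v < L"
proof -
  assume "v < n"
  then have "v \<in> rem 0" "v \<notin> rem L" using rem_L by auto
  then obtain i where "i < L" "v \<in> rem i" "v \<notin> rem (Suc i)"
    using nat_step_exists[of "\<lambda>i. v \<in> rem i" L] by blast
  then show ?thesis using rem_Suc lay_eq[of v i] by auto
qed

lemma in_rem_iff: "v < n \<Longrightarrow> v \<in> rem j \<longleftrightarrow> j \<le> lay v"
proof
  assume v: "v < n" and "v \<in> rem j"
  show "j \<le> lay v"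
  proof (rule ccontr)
    assume "\<not> j \<le> lay v"
    then show False
      using \<open>v \<in> rem j\<close> rem_antimono[of "Suc (lay v)" j] rem_Suc in_ls_lay[OF v] by auto
  qed
next
  assume "v < n" "j \<le> lay v"
  then show "v \<in> rem j" using in_ls_lay ls_sub[of "lay v"] rem_antimono[of j "lay v"] by auto
qed

lemma ls_eq: "ls j = {v. v < n \<and> lay v = j}"
proof
  show "ls j \<subseteq> {v. v < n \<and> lay v = j}" using ls_sub rem_sub lay_eq by fastforce
  show "{v. v < n \<and> lay v = j} \<subseteq> ls j" using in_ls_lay by auto
qed

lemma card_nbrs_rem_le: "v < n \<Longrightarrow> real (card (nbrs E v \<inter> rem (lay v))) \<le> d"
  using in_ls_lay[of v] unfolding layer_set_def peel_step_def by auto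

lemma card_le_peel_bound:
  assumes "v < n" "A \<subseteq> nbrs E v \<inter> rem (lay v)"
  shows "real (card A) \<le> d"
proof -
  have "card A \<le> card (nbrs E v \<inter> rem (lay v))" by (rule card_mono[OF _ assms(2)]) simp
  then show ?thesis using card_nbrs_rem_le[OF assms(1)] by linarith
qed

lemma card_parents_le: "v < n \<Longrightarrow> real (card (parents n E d v)) \<le> d"
proof (rule card_le_peel_bound)
  show "parents n E d v \<subseteq> nbrs E v \<inter> rem (lay v)"
  proof
    fix w assume "w \<in> parents n E d v"
    then have w: "w \<in> nbrs E v" "lay v < lay w" unfolding parents_def by auto
    then have "w < n" using nbrs_sub by auto
    then show "w \<in> nbrs E v \<inter> rem (lay v)" using in_rem_iff w by simp
  qed
qed

lemma card_same_layer_nbrs_le: "v < n \<Longrightarrow> real (card (nbrs E v \<inter> ls (lay v))) \<le> d"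
  by (rule card_le_peel_bound) (use ls_sub in auto)

lemma children_sub: "children n E d v \<subseteq> nbrs E v"
  unfolding children_def by auto

lemma finite_children[simp]: "finite (children n E d v)"
  by (rule finite_subset[OF children_sub]) simp

lemma finite_parents[simp]: "finite (parents n E d v)"
  unfolding parents_def by auto

lemma children_parents: "u \<in> children n E d v \<longleftrightarrow> v \<in> parents n E d u"
  unfolding children_def parents_def using nbrs_sym[of u v] by blast

lemma children_lt: "u \<in> children n E d v \<Longrightarrow> u < n"
  using children_sub nbrs_sub by fastforce

end

lemma peeling_if_arboricity_le:
  assumes G: "graph n E" and d: "2 * real (arboricity E) \<le> d"
  shows "peeling n E d"
proof
  fix R assume R: "R \<subseteq> {..<n}" "R \<noteq> {}"
  then obtain v where "v \<in> R" "card (nbrs E v \<inter> R) \<le> 2 * arboricity E"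
    using low_degree_vertex_exists[OF G _ R(2)] finite_subset by blast
  then have "v \<in> peel_step E d R" using d unfolding peel_step_def by (auto simp: inf.commute)
  then show "peel_step E d R \<noteq> {}" by auto
qed (fact G)

section \<open>Matching\<close>

lemma measure_pmf_bind_ge:
  assumes "\<And>x. x \<in> set_pmf M \<Longrightarrow> x \<in> B \<Longrightarrow> set_pmf (f x) \<subseteq> A"
  shows "measure_pmf.prob M B \<le> measure_pmf.prob (bind_pmf M f) A"
proof -
  have "emeasure (measure_pmf M) B = (\<integral>\<^sup>+x. indicator B x \<partial>M)" by simp
  also have "\<dots> \<le> (\<integral>\<^sup>+x. emeasure (f x) A \<partial>M)"
  proof (rule nn_integral_mono_AE, rule AE_pmfI)
    fix x assume x: "x \<in> set_pmf M"
    show "indicator B x \<le> emeasure (measure_pmf (f x)) A"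
    proof (cases "x \<in> B")
      case True
      have "emeasure (measure_pmf (f x)) (set_pmf (f x)) \<le> emeasure (measure_pmf (f x)) A"
        using assms[OF x True] by (intro emeasure_mono) auto
      then show ?thesis using True by (simp add: emeasure_pmf)
    qed simp
  qed
  also have "\<dots> = emeasure (bind_pmf M f) A" by simp
  finally show ?thesis by (simp add: measure_pmf.emeasure_eq_measure)
qed

lemma prob_compl_union_ge:
  assumes "finite I" and "\<And>i. i \<in> I \<Longrightarrow> measure_pmf.prob M (A i) \<le> b"
  shows "1 - real (card I) * b \<le> measure_pmf.prob M (- (\<Union>i\<in>I. A i))"
proof -
  have "measure_pmf.prob M (\<Union>i\<in>I. A i) \<le> (\<Sum>i\<in>I. measure_pmf.prob M (A i))"
    by (rule measure_pmf.finite_measure_subadditive_finite) (simp_all add: assms(1))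
  also have "\<dots> \<le> real (card I) * b" using sum_mono[of I _ "\<lambda>_. b"] assms(2) by simp
  finally show ?thesis
    using measure_pmf.prob_compl[of "\<Union>i\<in>I. A i" M] by (simp add: Compl_eq_Diff_UNIV)
qed

definition good_removal :: "nat \<Rightarrow> (nat \<times> nat) set \<Rightarrow> real \<Rightarrow> nat set \<Rightarrow> bool" where
  "good_removal n E d R \<longleftrightarrow> (\<forall>v < n. real (card (children n E d v)) \<ge> d ^ 4 \<longrightarrow>
        v \<in> R \<or> real (card {u \<in> children n E d v. u \<notin> R}) \<le> d ^ 4)"

lemma good_outcome_eq: "good_outcome n E R = good_removal n E (dpar n E) R"
  unfolding good_outcome_def good_removal_def Let_def by simp

context peeling
begin

definition mark_dist :: "nat \<Rightarrow> nat option pmf" where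
  "mark_dist u = (if parents n E d u = {} then return_pmf None
     else map_pmf Some (pmf_of_set (parents n E d u)))"

lemma mark_pmf_eq: "mark_pmf n E d = Pi_pmf {..<n} None mark_dist"
  unfolding mark_pmf_def mark_dist_def ..

definition marked_children :: "(nat \<Rightarrow> nat option) \<Rightarrow> nat \<Rightarrow> nat set" where
  "marked_children mk v = {u \<in> children n E d v. mk u = Some v}"

definition propose_dist :: "(nat \<Rightarrow> nat option) \<Rightarrow> nat \<Rightarrow> nat option pmf" where
  "propose_dist mk v = (if marked_children mk v = {} then return_pmf None
     else map_pmf Some (pmf_of_set (marked_children mk v)))"

lemma propose_pmf_eq: "propose_pmf n E d mk = Pi_pmf {..<n} None (propose_dist mk)"
  unfolding propose_pmf_def propose_dist_def marked_children_def Let_def ..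

lemma set_pmf_propose_dist:
  "set_pmf (propose_dist mk v) =
     (if marked_children mk v = {} then {None} else Some ` marked_children mk v)"
  unfolding propose_dist_def marked_children_def by auto

lemma proposal_support:
  assumes "pr \<in> set_pmf (propose_pmf n E d mk)"
  shows proposal_marked: "pr v = Some u \<Longrightarrow> v < n \<and> u \<in> children n E d v \<and> mk u = Some v"
    and proposal_exists: "v < n \<Longrightarrow> marked_children mk v \<noteq> {} \<Longrightarrow> pr v \<noteq> None"
proof -
  have pr: "pr \<in> PiE_dflt {..<n} None (set_pmf \<circ> propose_dist mk)"
    using assms unfolding propose_pmf_eq by (simp add: set_Pi_pmf)
  show "pr v = Some u \<Longrightarrow> v < n \<and> u \<in> children n E d v \<and> mk u = Some v"
  proof -
    assume a: "pr v = Some u"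
    then have "v < n" using pr unfolding PiE_dflt_def by (cases "v < n") auto
    then have "pr v \<in> set_pmf (propose_dist mk v)" using pr unfolding PiE_dflt_def by auto
    then have "u \<in> marked_children mk v" using a unfolding set_pmf_propose_dist by (auto split: if_splits)
    then show ?thesis using \<open>v < n\<close> unfolding marked_children_def by auto
  qed
  show "v < n \<Longrightarrow> marked_children mk v \<noteq> {} \<Longrightarrow> pr v \<noteq> None"
  proof -
    assume "v < n" "marked_children mk v \<noteq> {}"
    moreover from this(1) have "pr v \<in> set_pmf (propose_dist mk v)"
      using pr unfolding PiE_dflt_def by auto
    ultimately show ?thesis unfolding set_pmf_propose_dist by auto
  qed
qed

definition match_removed_from :: "(nat \<Rightarrow> nat option) \<Rightarrow> nat \<Rightarrow> nat set" where
  "match_removed_from pr j = fold (match_step n E d pr) (rev [j..<L]) {}"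

lemma match_removed_from_Suc:
  "j < L \<Longrightarrow> match_removed_from pr j = match_step n E d pr j (match_removed_from pr (Suc j))"
  unfolding match_removed_from_def by (simp add: upt_conv_Cons)

lemma match_removed_from_L: "L \<le> j \<Longrightarrow> match_removed_from pr j = {}"
  unfolding match_removed_from_def by simp

lemma match_removed_from_antimono: "j \<le> k \<Longrightarrow> match_removed_from pr k \<subseteq> match_removed_from pr j"
proof (induction k)
  case (Suc k)
  have "match_removed_from pr (Suc k) \<subseteq> match_removed_from pr k"
    by (cases "k < L") (auto simp: match_removed_from_Suc match_removed_from_L match_step_def)
  then show ?case using Suc by (cases "j = Suc k") (auto simp: le_Suc_eq)
qed simp

text \<open>When the layer of v is processed, the child u that v proposed is still present: it lies
  below, and it could only have been matched along the single edge it marked, the one to v.\<close>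

lemma proposed_removed:
  assumes pr: "pr \<in> set_pmf (propose_pmf n E d mk)" and pv: "pr v = Some u"
  shows "v \<in> match_removed n E d pr"
proof -
  have v: "v < n" and uc: "u \<in> children n E d v" and mku: "mk u = Some v"
    using proposal_marked[OF pr pv] by auto
  have lu: "lay u < lay v" using uc unfolding children_def by auto
  have u_not_removed: "u \<notin> match_removed_from pr j" if "lay v < j" for j
    using that
  proof (induction "L - j" arbitrary: j)
    case 0 then show ?case by (simp add: match_removed_from_L)
  next
    case (Suc k)
    then have jL: "j < L" and IH: "u \<notin> match_removed_from pr (Suc j)" by simp_all
    show ?case
    proof
      assume "u \<in> match_removed_from pr j"
      then obtain v' u' where w: "lay v' = j" "pr v' = Some u'" "u = u' \<or> u = v'"
        using IH unfolding match_removed_from_Suc[OF jL] match_step_def by auto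
      then show False
        using proposal_marked[OF pr w(2)] mku Suc.prems lu by auto
    qed
  qed
  have "v \<in> match_removed_from pr (lay v)"
    using u_not_removed[of "Suc (lay v)"] pv v
    unfolding match_removed_from_Suc[OF in_ls_lay[OF v, THEN conjunct2]] match_step_def
    by (cases "v \<in> match_removed_from pr (Suc (lay v))") auto
  then show ?thesis
    unfolding match_removed_def match_removed_from_def[symmetric]
    using match_removed_from_antimono[of 0 "lay v" pr] by auto
qed

lemma good_removal_if_all_marked:
  assumes pr: "pr \<in> set_pmf (propose_pmf n E d mk)"
    and marked: "\<And>v. v < n \<Longrightarrow> d ^ 4 \<le> real (card (children n E d v)) \<Longrightarrow> \<exists>u\<in>children n E d v. mk u = Some v"
  shows "good_removal n E d (match_removed n E d pr)"
proof -
  have "v \<in> match_removed n E d pr" if v: "v < n" and big: "d ^ 4 \<le> real (card (children n E d v))" for v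
  proof -
    have "marked_children mk v \<noteq> {}" using marked[OF v big] unfolding marked_children_def by auto
    then obtain u where "pr v = Some u" using proposal_exists[OF pr v] by auto
    then show ?thesis using proposed_removed[OF pr] by simp
  qed
  then show ?thesis unfolding good_removal_def by auto
qed

text \<open>Each child marks v with probability at least 1/d, because it has at most d parents.\<close>

lemma prob_no_child_marks_le:
  assumes d1: "d \<ge> 1"
  shows "measure_pmf.prob (mark_pmf n E d) {mk. \<forall>u\<in>children n E d v. mk u \<noteq> Some v}
           \<le> exp (- real (card (children n E d v)) / d)"
proof -
  define ch where "ch = children n E d v"
  define B where "B = (\<lambda>u. if u \<in> ch then - {Some v} else (UNIV :: nat option set))"
  have chn: "ch \<subseteq> {..<n}" unfolding ch_def using children_lt by auto
  have factor: "measure_pmf.prob (mark_dist u) (B u) \<le> (if u \<in> ch then 1 - 1 / d else 1)" for u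
  proof (cases "u \<in> ch")
    case True
    define P where "P = parents n E d u"
    have vP: "v \<in> P" using True unfolding P_def ch_def children_parents .
    have cP1: "card P \<ge> 1" using vP unfolding P_def by (metis One_nat_def Suc_leI card_gt_0_iff empty_iff finite_parents)
    have cPd: "real (card P) \<le> d" unfolding P_def using card_parents_le True chn by auto
    have "measure_pmf.prob (mark_dist u) (B u) = measure_pmf.prob (pmf_of_set P) (- {v})"
      unfolding mark_dist_def B_def P_def[symmetric] using True vP by (auto simp: vimage_def Compl_eq)
    also have "\<dots> = real (card P - 1) / real (card P)"
      using vP by (subst measure_pmf_of_set) (auto simp: P_def Diff_eq[symmetric])
    also have "\<dots> = 1 - 1 / real (card P)"
      using cP1 by (simp add: field_simps of_nat_diff)
    also have "\<dots> \<le> 1 - 1 / d" using cP1 cPd by (simp add: frac_le)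
    finally show ?thesis using True by simp
  qed (simp add: B_def)
  have "{mk. \<forall>u\<in>ch. mk u \<noteq> Some v} = Pi {..<n} B"
    unfolding B_def Pi_def using chn by auto
  then have "measure_pmf.prob (mark_pmf n E d) {mk. \<forall>u\<in>ch. mk u \<noteq> Some v}
      = (\<Prod>u\<in>{..<n}. measure_pmf.prob (mark_dist u) (B u))"
    unfolding mark_pmf_eq by (simp add: measure_Pi_pmf_Pi)
  also have "\<dots> \<le> (\<Prod>u\<in>{..<n}. (if u \<in> ch then 1 - 1 / d else 1))"
    by (rule prod_mono) (use factor in auto)
  also have "\<dots> = (1 - 1 / d) ^ card ch"
    using chn by (simp add: prod.If_cases Int_absorb1)
  also have "\<dots> \<le> exp (- 1 / d) ^ card ch"
    using exp_ge_add_one_self[of "- 1 / d"] d1 by (intro power_mono) simp_all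
  also have "\<dots> = exp (- real (card ch) / d)"
    by (simp add: exp_of_nat_mult[symmetric])
  finally show ?thesis unfolding ch_def .
qed

lemma prob_match_good:
  assumes d1: "d \<ge> 1"
  shows "1 - real n * exp (- (d ^ 3)) \<le> measure_pmf.prob (mark_pmf n E d \<bind> (\<lambda>mk.
      propose_pmf n E d mk \<bind> (\<lambda>pr. return_pmf (match_removed n E d pr)))) {R. good_removal n E d R}"
proof -
  define Bad where "Bad v = {mk. d ^ 4 \<le> real (card (children n E d v))
    \<and> (\<forall>u\<in>children n E d v. mk u \<noteq> Some v)}" for v
  have "measure_pmf.prob (mark_pmf n E d) (Bad v) \<le> exp (- (d ^ 3))" for v
  proof (cases "d ^ 4 \<le> real (card (children n E d v))")
    case True
    have "d ^ 3 \<le> real (card (children n E d v)) / d"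
      using True d1 by (simp add: pos_le_divide_eq power_Suc2[symmetric, of d 3])
    then have "exp (- real (card (children n E d v)) / d) \<le> exp (- (d ^ 3))" by simp
    moreover have "Bad v = {mk. \<forall>u\<in>children n E d v. mk u \<noteq> Some v}"
      using True unfolding Bad_def by simp
    ultimately show ?thesis using prob_no_child_marks_le[OF d1, of v] by (metis order_trans)
  qed (simp add: Bad_def)
  then have "1 - real n * exp (- (d ^ 3)) \<le> measure_pmf.prob (mark_pmf n E d) (- (\<Union>v\<in>{..<n}. Bad v))"
    using prob_compl_union_ge[of "{..<n}" "mark_pmf n E d" Bad] by simp
  also have "\<dots> \<le> measure_pmf.prob (mark_pmf n E d \<bind> (\<lambda>mk.
      propose_pmf n E d mk \<bind> (\<lambda>pr. return_pmf (match_removed n E d pr)))) {R. good_removal n E d R}"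
    by (rule measure_pmf_bind_ge)
      (auto simp: Bad_def intro!: good_removal_if_all_marked)
  finally show ?thesis .
qed

end

section \<open>No proposal among many vertices of a bounded-degree graph\<close>

lemma independent_subset_exists:
  fixes N :: "'a \<Rightarrow> 'a set" and D :: real
  assumes fin: "finite T" and ND: "\<And>u. u \<in> T \<Longrightarrow> real (card (N u \<inter> T)) \<le> D"
    and Nsym: "\<And>u w. u \<in> T \<Longrightarrow> w \<in> T \<Longrightarrow> w \<in> N u \<Longrightarrow> u \<in> N w"
    and Nirr: "\<And>u. u \<in> T \<Longrightarrow> u \<notin> N u"
  shows "\<exists>T'. T' \<subseteq> T \<and> (\<forall>u\<in>T'. N u \<inter> T' = {}) \<and> real (card T) \<le> (D + 1) * real (card T')"
  using fin ND Nsym Nirr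
proof (induction "card T" arbitrary: T rule: less_induct)
  case less
  show ?case
  proof (cases "T = {}")
    case True then show ?thesis by auto
  next
    case False
    then obtain u where u: "u \<in> T" by auto
    define T1 where "T1 = T - {u} - N u"
    have finT1: "finite T1" unfolding T1_def using less.prems(1) by simp
    have sub1: "T1 \<subseteq> T" unfolding T1_def by auto
    have "T1 \<subset> T" using u unfolding T1_def by auto
    then have lt: "card T1 < card T" using less.prems(1) by (simp add: psubset_card_mono)
    have ND1: "real (card (N w \<inter> T1)) \<le> D" if "w \<in> T1" for w
    proof -
      have "card (N w \<inter> T1) \<le> card (N w \<inter> T)" using sub1 less.prems(1) by (intro card_mono) auto
      then show ?thesis using less.prems(2)[of w] that sub1 by auto
    qed
    obtain T1' where T1': "T1' \<subseteq> T1" "\<forall>w\<in>T1'. N w \<inter> T1' = {}" "real (card T1) \<le> (D + 1) * real (card T1')"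
      using less.hyps[OF lt finT1 ND1] less.prems(3,4) sub1 by blast
    define T' where "T' = insert u T1'"
    have uT1': "u \<notin> T1'" using T1'(1) unfolding T1_def by auto
    have finT1': "finite T1'" using T1'(1) finT1 finite_subset by blast
    have cT': "card T' = card T1' + 1" unfolding T'_def using uT1' finT1' by simp
    have "T = insert u (T1 \<union> (N u \<inter> T))" unfolding T1_def using u by auto
    moreover have "card (insert u (T1 \<union> (N u \<inter> T))) \<le> Suc (card (T1 \<union> (N u \<inter> T)))"
      using less.prems(1) finT1 by (simp add: card_insert_if)
    ultimately have "card T \<le> Suc (card (T1 \<union> (N u \<inter> T)))" by simp
    moreover have "card (T1 \<union> (N u \<inter> T)) \<le> card T1 + card (N u \<inter> T)" by (rule card_Un_le)
    ultimately have "card T \<le> card T1 + card (N u \<inter> T) + 1" by simp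
    then have "real (card T) \<le> real (card T1) + D + 1"
      using less.prems(2)[OF u] by linarith
    also have "\<dots> \<le> (D + 1) * real (card T1') + D + 1" using T1'(3) by simp
    also have "\<dots> = (D + 1) * real (card T')" using cT' by (simp add: algebra_simps)
    finally have c: "real (card T) \<le> (D + 1) * real (card T')" .
    have "N u \<inter> T1' = {}" "u \<notin> N u" using T1'(1) u less.prems(4) unfolding T1_def by auto
    moreover have "u \<notin> N w" if "w \<in> T1'" for w
      using that T1'(1) sub1 less.prems(3)[of w u] u unfolding T1_def by blast
    ultimately have indep: "\<forall>w\<in>T'. N w \<inter> T' = {}" using T1'(2) unfolding T'_def by blast
    have "T' \<subseteq> T" using T1'(1) sub1 u unfolding T'_def by auto
    then show ?thesis using indep c by blast
  qed
qed

text \<open>A vertex of T with a marked neighbour x is charged to x, and x is charged at most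
  card {u\<in>T. x \<in> N u} times.\<close>

lemma prod_unproposed_le:
  fixes N :: "'a \<Rightarrow> 'a set" and p :: real
  assumes finT: "finite T" and finO: "finite Ou" and NO: "\<And>u. u \<in> T \<Longrightarrow> N u \<subseteq> Ou"
    and p: "0 \<le> p" "p \<le> 1"
  shows "(\<Prod>u\<in>T. if (\<forall>x\<in>N u. \<not> g x) then 1 - p else 1)
     \<le> exp (- p * real (card T)) * (\<Prod>x\<in>Ou. if g x then exp (p * real (card {u\<in>T. x \<in> N u})) else 1)"
proof -
  define Gs where "Gs = {u\<in>T. \<forall>x\<in>N u. \<not> g x}"
  define Bs where "Bs = {u\<in>T. \<not> (\<forall>x\<in>N u. \<not> g x)}"
  define S where "S = (\<Sum>x\<in>Ou. if g x then real (card {u\<in>T. x \<in> N u}) else 0)"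
  have finGs: "finite Gs" unfolding Gs_def using finT by simp
  have TGB: "T = Gs \<union> Bs" unfolding Gs_def Bs_def by auto
  have dGB: "Gs \<inter> Bs = {}" unfolding Gs_def Bs_def by auto
  have finBs: "finite Bs" unfolding Bs_def using finT by simp
  have cT: "card T = card Gs + card Bs"
    using card_Un_disjoint[OF finGs finBs dGB] TGB by simp
  have "(\<Prod>u\<in>T. if (\<forall>x\<in>N u. \<not> g x) then 1 - p else 1) = (1 - p) ^ card Gs"
  proof -
    have e: "T \<inter> {u. \<forall>x\<in>N u. \<not> g x} = Gs" unfolding Gs_def by auto
    show ?thesis using finT by (simp add: prod.If_cases e)
  qed
  also have "\<dots> \<le> exp (- p) ^ card Gs"
    using p by (intro power_mono) (use exp_ge_add_one_self[of "- p"] in auto)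
  also have "\<dots> = exp (- p * real (card Gs))" by (simp add: exp_of_nat_mult[symmetric] mult.commute)
  finally have A: "(\<Prod>u\<in>T. if (\<forall>x\<in>N u. \<not> g x) then 1 - p else 1) \<le> exp (- p * real (card Gs))" .
  have Bsub: "Bs \<subseteq> (\<Union>x\<in>{x\<in>Ou. g x}. {u\<in>T. x \<in> N u})"
    unfolding Bs_def using NO by blast
  have "card Bs \<le> card (\<Union>x\<in>{x\<in>Ou. g x}. {u\<in>T. x \<in> N u})"
    by (rule card_mono) (use finO finT Bsub in auto)
  also have "\<dots> \<le> (\<Sum>x\<in>{x\<in>Ou. g x}. card {u\<in>T. x \<in> N u})"
    by (rule card_UN_le) (use finO in simp)
  finally have "real (card Bs) \<le> real (\<Sum>x\<in>{x\<in>Ou. g x}. card {u\<in>T. x \<in> N u})"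
    by (rule of_nat_mono)
  also have "\<dots> = (\<Sum>x\<in>{x\<in>Ou. g x}. real (card {u\<in>T. x \<in> N u}))" by simp
  also have "\<dots> = S" unfolding S_def using finO by (simp add: sum.inter_filter)
  finally have B: "real (card Bs) \<le> S" .
  have "p * real (card Bs) \<le> p * S" using B p by (intro mult_left_mono)
  then have "- p * real (card Gs) \<le> - p * real (card T) + p * S"
    by (simp add: cT algebra_simps)
  then have "exp (- p * real (card Gs)) \<le> exp (- p * real (card T) + p * S)" by simp
  also have "\<dots> = exp (- p * real (card T)) * exp (p * S)" by (rule exp_add)
  also have "exp (p * S) = (\<Prod>x\<in>Ou. exp (p * (if g x then real (card {u\<in>T. x \<in> N u}) else 0)))"
    unfolding S_def sum_distrib_left using finO by (simp add: exp_sum)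
  also have "\<dots> = (\<Prod>x\<in>Ou. if g x then exp (p * real (card {u\<in>T. x \<in> N u})) else 1)"
    by (intro prod.cong) auto
  finally show ?thesis using A by linarith
qed

lemma bernoulli_exp_moment_le:
  fixes p c :: real
  assumes "0 \<le> p" "p \<le> 1" "0 \<le> c" "p * c \<le> 1"
  shows "exp (p * c) * p + (1 - p) \<le> exp (2 * p\<^sup>2 * c)"
proof -
  have "exp (p * c) \<le> 1 + p * c + (p * c)\<^sup>2" using assms by (intro exp_bound) (simp_all add: mult_nonneg_nonneg)
  also have "(p * c)\<^sup>2 \<le> p * c"
  proof -
    have "0 \<le> p * c" using assms by simp
    then have "(p * c) * (p * c) \<le> (p * c) * 1" using assms(4) by (intro mult_left_mono)
    then show ?thesis by (simp add: power2_eq_square)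
  qed
  finally have "exp (p * c) \<le> 1 + 2 * (p * c)" by (simp add: mult.commute)
  then have "exp (p * c) * p \<le> (1 + 2 * (p * c)) * p" using assms by (intro mult_right_mono)
  then have "exp (p * c) * p + (1 - p) \<le> 1 + 2 * p\<^sup>2 * c" by (simp add: algebra_simps power2_eq_square)
  also have "\<dots> \<le> exp (2 * p\<^sup>2 * c)" using exp_ge_add_one_self[of "2 * p\<^sup>2 * c"] by simp
  finally show ?thesis .
qed

lemma exp_moment_prod_le:
  fixes c :: "'a \<Rightarrow> real" and p D t :: real
  assumes finOu: "finite Ou" and p: "0 \<le> p" "p \<le> 1" and c0: "\<And>x. x \<in> Ou \<Longrightarrow> 0 \<le> c x"
    and cD: "\<And>x. x \<in> Ou \<Longrightarrow> c x \<le> D" and pD: "p * D \<le> 1/4"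
    and sumc: "(\<Sum>x\<in>Ou. c x) \<le> D * t" and t0: "0 \<le> t"
  shows "exp (- p * t) * (\<Prod>x\<in>Ou. exp (p * c x) * p + (1 - p)) \<le> exp (- p * t / 2)"
proof -
  have "(\<Prod>x\<in>Ou. exp (p * c x) * p + (1 - p)) \<le> (\<Prod>x\<in>Ou. exp (2 * p\<^sup>2 * c x))"
  proof (rule prod_mono)
    fix x assume x: "x \<in> Ou"
    have "p * c x \<le> p * D" using cD[OF x] p by (intro mult_left_mono)
    then have "p * c x \<le> 1" using pD by simp
    then show "0 \<le> exp (p * c x) * p + (1 - p) \<and> exp (p * c x) * p + (1 - p) \<le> exp (2 * p\<^sup>2 * c x)"
      using bernoulli_exp_moment_le[OF p c0[OF x]] p by simp
  qed
  also have "\<dots> = exp (2 * p\<^sup>2 * (\<Sum>x\<in>Ou. c x))"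
    using finOu by (simp add: exp_sum sum_distrib_left)
  also have "\<dots> \<le> exp (2 * p\<^sup>2 * (D * t))"
    using sumc by (simp add: mult_left_mono)
  finally have A: "(\<Prod>x\<in>Ou. exp (p * c x) * p + (1 - p)) \<le> exp (2 * p\<^sup>2 * (D * t))" .
  have "exp (- p * t) * (\<Prod>x\<in>Ou. exp (p * c x) * p + (1 - p)) \<le> exp (- p * t) * exp (2 * p\<^sup>2 * (D * t))"
    using A by (intro mult_left_mono) simp_all
  also have "\<dots> = exp (- p * t + 2 * p\<^sup>2 * (D * t))" by (rule exp_add[symmetric])
  also have "\<dots> \<le> exp (- p * t / 2)"
  proof -
    have "2 * p\<^sup>2 * (D * t) = 2 * (p * D) * (p * t)" by (simp add: power2_eq_square algebra_simps)
    also have "\<dots> \<le> 2 * (1/4) * (p * t)" using pD p t0 by (intro mult_right_mono mult_left_mono) (simp_all add: mult_nonneg_nonneg)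
    finally show ?thesis by simp
  qed
  finally show ?thesis .
qed

lemma nn_integral_bernoulli_pmf_real:
  fixes f :: "bool \<Rightarrow> real"
  assumes "0 \<le> p" "p \<le> 1" "\<And>b. f b \<ge> 0"
  shows "(\<integral>\<^sup>+b. ennreal (f b) \<partial>bernoulli_pmf p) = ennreal (f True * p + f False * (1 - p))"
  using assms by (simp add: ennreal_mult ennreal_plus)

text \<open>Conditioning on the marks g outside T: the vertices of T are then proposed independently.\<close>

lemma nn_integral_unproposed_given_outside:
  fixes N :: "'a \<Rightarrow> 'a set" and p :: real
  assumes finT: "finite T" and disj: "T \<inter> Ou = {}" and NO: "\<And>u. u \<in> T \<Longrightarrow> N u \<subseteq> Ou"
    and p: "0 \<le> p" "p \<le> 1"
  shows "(\<integral>\<^sup>+f. indicator {a. \<forall>u\<in>T. \<not> (a u \<and> (\<forall>x\<in>N u. \<not> a x))} (\<lambda>x. if x \<in> Ou then g x else f x)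
            \<partial>Pi_pmf T False (\<lambda>_. bernoulli_pmf p))
         = ennreal (\<Prod>u\<in>T. if \<forall>x\<in>N u. \<not> g x then 1 - p else 1)"
proof -
  define h where "h = (\<lambda>u b. if b \<and> (\<forall>x\<in>N u. \<not> g x) then 0 else (1::real))"
  have ind: "indicator {a. \<forall>u\<in>T. \<not> (a u \<and> (\<forall>x\<in>N u. \<not> a x))} (\<lambda>x. if x \<in> Ou then g x else f x)
      = (\<Prod>u\<in>T. ennreal (h u (f u)))" for f
  proof (cases "\<exists>u\<in>T. f u \<and> (\<forall>x\<in>N u. \<not> g x)")
    case True
    then obtain u where u: "u \<in> T" "f u" "\<forall>x\<in>N u. \<not> g x" by blast
    then have "(\<Prod>u\<in>T. ennreal (h u (f u))) = 0"
      using finT by (intro prod_zero) (auto simp: h_def intro!: bexI[of _ u])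
    moreover have "(\<lambda>x. if x \<in> Ou then g x else f x) \<notin> {a. \<forall>u\<in>T. \<not> (a u \<and> (\<forall>x\<in>N u. \<not> a x))}"
      using u disj NO[OF u(1)] by auto
    ultimately show ?thesis by simp
  next
    case False
    then have "(\<Prod>u\<in>T. ennreal (h u (f u))) = 1" by (intro prod.neutral) (auto simp: h_def)
    moreover have "(\<lambda>x. if x \<in> Ou then g x else f x) \<in> {a. \<forall>u\<in>T. \<not> (a u \<and> (\<forall>x\<in>N u. \<not> a x))}"
    proof -
      have "\<not> (f u \<and> (\<forall>x\<in>N u. \<not> g x))" "u \<notin> Ou" if "u \<in> T" for u
        using False disj that by blast+
      then show ?thesis using NO by fastforce
    qed
    ultimately show ?thesis by simp
  qed
  have "(\<integral>\<^sup>+f. (\<Prod>u\<in>T. ennreal (h u (f u))) \<partial>Pi_pmf T False (\<lambda>_. bernoulli_pmf p))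
      = (\<Prod>u\<in>T. \<integral>\<^sup>+b. ennreal (h u b) \<partial>bernoulli_pmf p)"
    by (rule nn_integral_prod_Pi_pmf[OF finT])
  also have "\<dots> = (\<Prod>u\<in>T. ennreal (if \<forall>x\<in>N u. \<not> g x then 1 - p else 1))"
    by (intro prod.cong refl, subst nn_integral_bernoulli_pmf_real[OF p]) (auto simp: h_def)
  also have "\<dots> = ennreal (\<Prod>u\<in>T. if \<forall>x\<in>N u. \<not> g x then 1 - p else 1)"
    by (rule prod_ennreal) (use p in auto)
  finally show ?thesis unfolding ind .
qed

lemma card_filter_eq_sum: "finite A \<Longrightarrow> card {x\<in>A. P x} = (\<Sum>x\<in>A. if P x then 1 else (0::nat))"
  using sum.inter_filter[of A "\<lambda>_. 1::nat" P] by simp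

lemma sum_card_filter_swap:
  assumes "finite A" "finite B"
  shows "(\<Sum>x\<in>A. card {y\<in>B. R x y}) = (\<Sum>y\<in>B. card {x\<in>A. R x y})"
  using assms by (simp add: card_filter_eq_sum sum.swap[of _ A])

lemma prob_unproposed_independent_le:
  fixes N :: "'a \<Rightarrow> 'a set" and p D :: real
  assumes finA: "finite A" and TA: "T \<subseteq> A"
    and NA: "\<And>u. u \<in> A \<Longrightarrow> N u \<subseteq> A"
    and Nsym: "\<And>u w. u \<in> A \<Longrightarrow> w \<in> A \<Longrightarrow> w \<in> N u \<Longrightarrow> u \<in> N w"
    and ND: "\<And>u. u \<in> A \<Longrightarrow> real (card (N u)) \<le> D"
    and indep: "\<And>u. u \<in> T \<Longrightarrow> N u \<inter> T = {}"
    and p: "0 \<le> p" "p \<le> 1" and pD: "p * D \<le> 1/4"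
  shows "emeasure (Pi_pmf A False (\<lambda>_. bernoulli_pmf p)) {a. \<forall>u\<in>T. \<not> (a u \<and> (\<forall>x\<in>N u. \<not> a x))}
           \<le> ennreal (exp (- p * real (card T) / 2))"
proof -
  define Ou where "Ou = A - T"
  define Ev where "Ev = {a. \<forall>u\<in>T. \<not> (a u \<and> (\<forall>x\<in>N u. \<not> a x))}"
  define B where "B = (\<lambda>_::'a. bernoulli_pmf p)"
  define c where "c = (\<lambda>x. real (card {u\<in>T. x \<in> N u}))"
  have finT: "finite T" using finA TA finite_subset by blast
  have finOu: "finite Ou" unfolding Ou_def using finA by simp
  have disj: "T \<inter> Ou = {}" unfolding Ou_def by auto
  have NO: "N u \<subseteq> Ou" if "u \<in> T" for u using NA[of u] TA that indep[OF that] unfolding Ou_def by auto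
  have split: "Pi_pmf A False B
      = map_pmf (\<lambda>(g, f) x. if x \<in> Ou then g x else f x) (pair_pmf (Pi_pmf Ou False B) (Pi_pmf T False B))"
  proof -
    have "A = Ou \<union> T" unfolding Ou_def using TA by auto
    then show ?thesis by (simp only:) (rule Pi_pmf_union, use finOu finT in \<open>auto simp: Ou_def\<close>)
  qed
  have "emeasure (Pi_pmf A False B) Ev = (\<integral>\<^sup>+a. indicator Ev a \<partial>Pi_pmf A False B)"
    by simp
  also have "\<dots> = (\<integral>\<^sup>+g. \<integral>\<^sup>+f. indicator Ev (\<lambda>x. if x \<in> Ou then g x else f x) \<partial>Pi_pmf T False B \<partial>Pi_pmf Ou False B)"
    unfolding split by (simp add: nn_integral_pair_pmf' case_prod_unfold)
  also have "\<dots> = (\<integral>\<^sup>+g. ennreal (\<Prod>u\<in>T. if \<forall>x\<in>N u. \<not> g x then 1 - p else 1) \<partial>Pi_pmf Ou False B)"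
    unfolding Ev_def B_def
    by (intro nn_integral_cong nn_integral_unproposed_given_outside[of T Ou N, OF finT disj NO p])
  also have "\<dots> \<le> (\<integral>\<^sup>+g. ennreal (exp (- p * real (card T))) *
        (\<Prod>x\<in>Ou. ennreal (if g x then exp (p * c x) else 1)) \<partial>Pi_pmf Ou False B)"
  proof (rule nn_integral_mono)
    fix g :: "'a \<Rightarrow> bool"
    have "(\<Prod>u\<in>T. if \<forall>x\<in>N u. \<not> g x then 1 - p else 1)
        \<le> exp (- p * real (card T)) * (\<Prod>x\<in>Ou. if g x then exp (p * c x) else 1)"
      unfolding c_def by (rule prod_unproposed_le[OF finT finOu NO p])
    then show "ennreal (\<Prod>u\<in>T. if \<forall>x\<in>N u. \<not> g x then 1 - p else 1)
        \<le> ennreal (exp (- p * real (card T))) * (\<Prod>x\<in>Ou. ennreal (if g x then exp (p * c x) else 1))"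
      by (simp add: prod_ennreal ennreal_mult[symmetric] prod_nonneg ennreal_leI)
  qed
  also have "\<dots> = ennreal (exp (- p * real (card T))) *
        (\<integral>\<^sup>+g. (\<Prod>x\<in>Ou. ennreal (if g x then exp (p * c x) else 1)) \<partial>Pi_pmf Ou False B)"
    by (rule nn_integral_cmult) simp
  also have "(\<integral>\<^sup>+g. (\<Prod>x\<in>Ou. ennreal (if g x then exp (p * c x) else 1)) \<partial>Pi_pmf Ou False B)
      = (\<Prod>x\<in>Ou. \<integral>\<^sup>+b. ennreal (if b then exp (p * c x) else 1) \<partial>B x)"
    by (rule nn_integral_prod_Pi_pmf[OF finOu])
  also have "\<dots> = (\<Prod>x\<in>Ou. ennreal (exp (p * c x) * p + (1 - p)))"
    unfolding B_def by (intro prod.cong refl, subst nn_integral_bernoulli_pmf_real[OF p]) auto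
  also have "\<dots> = ennreal (\<Prod>x\<in>Ou. exp (p * c x) * p + (1 - p))"
    by (rule prod_ennreal) (use p in auto)
  also have "ennreal (exp (- p * real (card T))) * \<dots>
      = ennreal (exp (- p * real (card T)) * (\<Prod>x\<in>Ou. exp (p * c x) * p + (1 - p)))"
    by (rule ennreal_mult[symmetric]) (use p in \<open>auto intro!: prod_nonneg\<close>)
  also have "\<dots> \<le> ennreal (exp (- p * real (card T) / 2))"
  proof (rule ennreal_leI, rule exp_moment_prod_le[OF finOu p _ _ pD])
    show "0 \<le> c x" for x unfolding c_def by simp
    show "c x \<le> D" if x: "x \<in> Ou" for x
    proof -
      have xA: "x \<in> A" using x unfolding Ou_def by auto
      have "{u\<in>T. x \<in> N u} \<subseteq> N x" using Nsym xA TA by auto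
      moreover have "finite (N x)" using NA[OF xA] finA finite_subset by blast
      ultimately have "card {u\<in>T. x \<in> N u} \<le> card (N x)" by (rule card_mono[rotated])
      then show ?thesis unfolding c_def using ND[OF xA] by linarith
    qed
    have "(\<Sum>x\<in>Ou. c x) = real (\<Sum>x\<in>Ou. card {u\<in>T. x \<in> N u})"
      unfolding c_def by simp
    also have "\<dots> = (\<Sum>u\<in>T. real (card {x\<in>Ou. x \<in> N u}))"
      unfolding sum_card_filter_swap[OF finOu finT] by simp
    also have "\<dots> \<le> (\<Sum>u\<in>T. D)"
    proof (rule sum_mono)
      fix u assume "u \<in> T"
      then have uA: "u \<in> A" using TA by auto
      have "finite (N u)" using NA[OF uA] finA finite_subset by blast
      then have "card {x\<in>Ou. x \<in> N u} \<le> card (N u)" by (rule card_mono) auto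
      then show "real (card {x\<in>Ou. x \<in> N u}) \<le> D" using ND[OF uA] by linarith
    qed
    finally show "(\<Sum>x\<in>Ou. c x) \<le> D * real (card T)" by (simp add: mult.commute)
  qed simp
  finally show ?thesis unfolding Ev_def B_def .
qed

text \<open>Passing to an independent subset of T costs a factor D + 1 in the exponent.\<close>

lemma prob_unproposed_le:
  fixes N :: "'a \<Rightarrow> 'a set" and p D :: real
  assumes finA: "finite A" and TA: "T \<subseteq> A"
    and NA: "\<And>u. u \<in> A \<Longrightarrow> N u \<subseteq> A"
    and Nsym: "\<And>u w. u \<in> A \<Longrightarrow> w \<in> A \<Longrightarrow> w \<in> N u \<Longrightarrow> u \<in> N w"
    and Nirr: "\<And>u. u \<in> A \<Longrightarrow> u \<notin> N u"
    and ND: "\<And>u. u \<in> A \<Longrightarrow> real (card (N u)) \<le> D"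
    and p: "0 \<le> p" "p \<le> 1" and pD: "p * D \<le> 1/4" and D0: "0 \<le> D"
  shows "emeasure (Pi_pmf A False (\<lambda>_. bernoulli_pmf p)) {a. \<forall>u\<in>T. \<not> (a u \<and> (\<forall>x\<in>N u. \<not> a x))}
           \<le> ennreal (exp (- (p / (2 * (D + 1))) * real (card T)))"
proof -
  have finT: "finite T" using finA TA finite_subset by blast
  have NDT: "real (card (N u \<inter> T)) \<le> D" if "u \<in> T" for u
  proof -
    have uA: "u \<in> A" using that TA by auto
    have "finite (N u)" using NA[OF uA] finA finite_subset by blast
    then have "card (N u \<inter> T) \<le> card (N u)" by (intro card_mono) auto
    then show ?thesis using ND[OF uA] by linarith
  qed
  obtain T' where T': "T' \<subseteq> T" "\<forall>u\<in>T'. N u \<inter> T' = {}" "real (card T) \<le> (D + 1) * real (card T')"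
  proof -
    have s: "u \<in> N w" if "u \<in> T" "w \<in> T" "w \<in> N u" for u w
      using Nsym[of u w] that TA by auto
    have i: "u \<notin> N u" if "u \<in> T" for u using Nirr[of u] that TA by auto
    show ?thesis using independent_subset_exists[OF finT NDT s i] that by metis
  qed
  have "emeasure (Pi_pmf A False (\<lambda>_. bernoulli_pmf p)) {a. \<forall>u\<in>T. \<not> (a u \<and> (\<forall>x\<in>N u. \<not> a x))}
      \<le> emeasure (Pi_pmf A False (\<lambda>_. bernoulli_pmf p)) {a. \<forall>u\<in>T'. \<not> (a u \<and> (\<forall>x\<in>N u. \<not> a x))}"
    using T'(1) by (intro emeasure_mono) auto
  also have "\<dots> \<le> ennreal (exp (- p * real (card T') / 2))"
  proof (rule prob_unproposed_independent_le[OF finA _ NA Nsym ND _ p pD])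
    show "T' \<subseteq> A" using T'(1) TA by auto
    show "N u \<inter> T' = {}" if "u \<in> T'" for u using T'(2) that by auto
  qed
  also have "\<dots> \<le> ennreal (exp (- (p / (2 * (D + 1))) * real (card T)))"
  proof (rule ennreal_leI, subst exp_le_cancel_iff)
    have "real (card T) / (D + 1) \<le> real (card T')" using T'(3) D0 by (simp add: divide_le_eq mult.commute)
    then have "p * (real (card T) / (D + 1)) \<le> p * real (card T')" using p by (intro mult_left_mono)
    then have le: "p * (real (card T) / (D + 1)) / 2 \<le> p * real (card T') / 2" by (rule divide_right_mono) simp
    have "(p / (2 * (D + 1))) * real (card T) = p * (real (card T) / (D + 1)) / 2" by simp
    also have "\<dots> \<le> p * real (card T') / 2" by (rule le)
    finally have "(p / (2 * (D + 1))) * real (card T) \<le> p * real (card T') / 2" .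
    then show "- p * real (card T') / 2 \<le> - (p / (2 * (D + 1))) * real (card T)" by simp
  qed
  finally show ?thesis .
qed

section \<open>Independent set\<close>

context peeling
begin

abbreviation "proposed \<equiv> mis_proposed n E d"

definition mis_removed_from :: "(nat \<Rightarrow> bool) \<Rightarrow> nat \<Rightarrow> nat set" where
  "mis_removed_from mk j = fold (mis_step n E d mk) (rev [j..<L]) {}"

lemma mis_removed_from_Suc: "j < L \<Longrightarrow> mis_removed_from mk j = mis_step n E d mk j (mis_removed_from mk (Suc j))"
  unfolding mis_removed_from_def by (simp add: upt_conv_Cons)

lemma mis_removed_from_L: "L \<le> j \<Longrightarrow> mis_removed_from mk j = {}"
  unfolding mis_removed_from_def by simp

lemma mis_removed_eq: "mis_removed n E d mk = mis_removed_from mk 0"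
  unfolding mis_removed_def mis_removed_from_def ..

lemma mis_step_mono: "R \<subseteq> mis_step n E d mk i R"
  unfolding mis_step_def Let_def by auto

lemma mis_removed_from_Suc_subset: "mis_removed_from mk (Suc j) \<subseteq> mis_removed_from mk j"
  by (cases "j < L") (simp_all add: mis_removed_from_Suc mis_step_mono mis_removed_from_L)

lemma mis_removed_from_antimono: "j \<le> k \<Longrightarrow> mis_removed_from mk k \<subseteq> mis_removed_from mk j"
proof (induction k)
  case 0 then show ?case by simp
next
  case (Suc k)
  then show ?case using mis_removed_from_Suc_subset[of mk k] by (cases "j = Suc k") (auto simp: le_Suc_eq)
qed

lemma proposed_local:
  assumes u: "u \<in> ls j" and agree: "\<And>x. x \<in> ls j \<Longrightarrow> mk x = a x"
  shows "proposed mk u \<longleftrightarrow> a u \<and> (\<forall>x\<in>nbrs E u \<inter> ls j. \<not> a x)"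
proof -
  have lu: "lay u = j" using u lay_eq by simp
  have "x \<in> ls j \<longleftrightarrow> lay x = j" if "x \<in> nbrs E u" for x
  proof -
    have "x < n" using that nbrs_sub by auto
    then show ?thesis using ls_eq by auto
  qed
  then show ?thesis unfolding mis_proposed_def using agree u lu by auto
qed

lemma mis_step_local:
  assumes agree: "\<And>x. x \<in> ls i \<Longrightarrow> mk x = mk' x"
  shows "mis_step n E d mk i R = mis_step n E d mk' i R"
proof -
  have "proposed mk v = proposed mk' v" if "v < n" "lay v = i" for v
  proof -
    have v: "v \<in> ls i" using that ls_eq by auto
    show ?thesis using proposed_local[OF v agree] proposed_local[OF v, of mk' mk'] by simp
  qed
  then have "{v. v < n \<and> lay v = i \<and> proposed mk v \<and> v \<notin> R} = {v. v < n \<and> lay v = i \<and> proposed mk' v \<and> v \<notin> R}"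
    by blast
  then show ?thesis unfolding mis_step_def Let_def by simp
qed

lemma mis_removed_from_local:
  assumes "\<And>x. x \<in> rem j \<Longrightarrow> mk x = mk' x"
  shows "mis_removed_from mk j = mis_removed_from mk' j"
  using assms
proof (induction "L - j" arbitrary: j)
  case 0 then show ?case by (simp add: mis_removed_from_L)
next
  case (Suc k)
  then have jL: "j < L" by simp
  have IH: "mis_removed_from mk (Suc j) = mis_removed_from mk' (Suc j)"
  proof (rule Suc.hyps(1))
    show "k = L - Suc j" using Suc.hyps(2) by simp
    show "mk x = mk' x" if "x \<in> rem (Suc j)" for x
      using Suc.prems[of x] that rem_antimono[of j "Suc j"] by auto
  qed
  have "mis_step n E d mk j R = mis_step n E d mk' j R" for R
    by (rule mis_step_local) (use Suc.prems ls_sub in blast)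
  then show ?case using IH by (simp add: mis_removed_from_Suc[OF jL])
qed

definition surviving_children :: "nat \<Rightarrow> nat \<Rightarrow> (nat \<Rightarrow> bool) \<Rightarrow> nat set" where
  "surviving_children v l mk = {u \<in> children n E d v. lay u = l \<and> u \<notin> mis_removed_from mk (Suc l)}"

definition decay_rate :: real where
  "decay_rate = 1 / d\<^sup>2 / (2 * (d + 1))"

text \<open>The weight of v from layer j on is exp (decay_rate * s), where s counts the surviving
  children of v in layers j and above, on the event that none of them was proposed, and 0 otherwise.
  Revealing the marks of one more layer multiplies it by a factor of expectation at most 1,
  so its expectation is at most 1; an exponential Markov bound then controls the survivors.\<close>

definition layer_weight :: "nat \<Rightarrow> nat \<Rightarrow> (nat \<Rightarrow> bool) \<Rightarrow> ennreal" where
  "layer_weight v l mk = (if \<forall>u\<in>surviving_children v l mk. \<not> proposed mk u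
     then ennreal (exp (decay_rate * real (card (surviving_children v l mk)))) else 0)"

definition weight :: "nat \<Rightarrow> nat \<Rightarrow> (nat \<Rightarrow> bool) \<Rightarrow> ennreal" where
  "weight v j mk = (\<Prod>l\<in>{j..<L}. layer_weight v l mk)"

lemma surviving_children_sub: "surviving_children v l mk \<subseteq> ls l"
  unfolding surviving_children_def ls_eq using children_lt by auto

lemma finite_surviving_children[simp]: "finite (surviving_children v l mk)"
  unfolding surviving_children_def by simp

lemma layer_weight_local:
  assumes "\<And>x. x \<in> rem l \<Longrightarrow> mk x = mk' x"
  shows "layer_weight v l mk = layer_weight v l mk'"
proof -
  have "mis_removed_from mk (Suc l) = mis_removed_from mk' (Suc l)"
    by (rule mis_removed_from_local) (use assms rem_antimono[of l "Suc l"] in auto)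
  then have T: "surviving_children v l mk = surviving_children v l mk'"
    unfolding surviving_children_def by simp
  have "proposed mk u = proposed mk' u" if "u \<in> surviving_children v l mk" for u
  proof -
    have u: "u \<in> ls l" using that surviving_children_sub by auto
    have "mk x = mk' x" if "x \<in> ls l" for x using assms that ls_sub by auto
    then show ?thesis using proposed_local[OF u] proposed_local[OF u, of mk' mk'] by simp
  qed
  then show ?thesis unfolding layer_weight_def T by simp
qed

lemma weight_local:
  assumes "\<And>x. x \<in> rem j \<Longrightarrow> mk x = mk' x"
  shows "weight v j mk = weight v j mk'"
  unfolding weight_def
proof (rule prod.cong[OF refl])
  fix l assume "l \<in> {j..<L}"
  then have "rem l \<subseteq> rem j" using rem_antimono by simp
  then show "layer_weight v l mk = layer_weight v l mk'" using assms by (intro layer_weight_local) auto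
qed

lemma weight_Suc: "j < L \<Longrightarrow> weight v j mk = layer_weight v j mk * weight v (Suc j) mk"
proof -
  assume "j < L"
  then have "{j..<L} = insert j {Suc j..<L}" by auto
  then show ?thesis unfolding weight_def by simp
qed

lemma nn_integral_layer_weight_le:
  assumes d4: "d \<ge> 4" and T: "T \<subseteq> ls j"
  shows "(\<integral>\<^sup>+a. (if \<forall>u\<in>T. \<not> (a u \<and> (\<forall>x\<in>nbrs E u \<inter> ls j. \<not> a x))
              then ennreal (exp (decay_rate * real (card T))) else 0)
          \<partial>Pi_pmf (ls j) False (\<lambda>_. bernoulli_pmf (1 / d\<^sup>2))) \<le> 1"
proof -
  define p where "p = 1 / d\<^sup>2"
  define Ev where "Ev = {a. \<forall>u\<in>T. \<not> (a u \<and> (\<forall>x\<in>nbrs E u \<inter> ls j. \<not> a x))}"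
  define P where "P = Pi_pmf (ls j) False (\<lambda>_. bernoulli_pmf p)"
  define w where "w = exp (decay_rate * real (card T))"
  have p1: "p \<le> 1"
  proof -
    have "1 \<le> d * d" using d4 mult_mono[of 1 d 1 d] by simp
    then show ?thesis unfolding p_def by (simp add: power2_eq_square)
  qed
  have pD: "p * d \<le> 1/4" unfolding p_def using d4 by (simp add: power2_eq_square field_simps)
  have "emeasure P Ev \<le> ennreal (exp (- (p / (2 * (d + 1))) * real (card T)))"
    unfolding P_def Ev_def
  proof (rule prob_unproposed_le[OF finite_ls T _ _ _ _ _ p1 pD])
    show "u \<in> nbrs E w \<inter> ls j" if "u \<in> ls j" "w \<in> ls j" "w \<in> nbrs E u \<inter> ls j" for u w
      using that nbrs_sym by auto
    show "real (card (nbrs E u \<inter> ls j)) \<le> d" if "u \<in> ls j" for u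
      using that card_same_layer_nbrs_le[of u] by (simp add: ls_eq)
  qed (use d4 nbrs_irrefl in \<open>auto simp: p_def\<close>)
  then have lb: "emeasure P Ev \<le> ennreal (1 / w)"
    unfolding w_def decay_rate_def p_def by (simp add: exp_minus inverse_eq_divide)
  have "(\<integral>\<^sup>+a. (if a \<in> Ev then ennreal w else 0) \<partial>P) = (\<integral>\<^sup>+a. ennreal w * indicator Ev a \<partial>P)"
    by (intro nn_integral_cong) (simp add: indicator_def)
  also have "\<dots> = ennreal w * emeasure P Ev" by (rule nn_integral_cmult_indicator) simp
  also have "\<dots> \<le> ennreal w * ennreal (1 / w)"
    by (rule mult_left_mono[OF lb]) simp
  also have "\<dots> = 1" unfolding w_def by (simp add: ennreal_mult[symmetric])
  finally show ?thesis unfolding Ev_def P_def w_def p_def by (simp add: mem_Collect_eq)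
qed

lemma nn_integral_weight_step_le:
  assumes d4: "d \<ge> 4" and jL: "j < L"
  shows "(\<integral>\<^sup>+a. weight v j (\<lambda>x. if x \<in> rem (Suc j) then b x else a x)
            \<partial>Pi_pmf (ls j) False (\<lambda>_. bernoulli_pmf (1 / d\<^sup>2))) \<le> weight v (Suc j) b"
proof -
  define mg where "mg = (\<lambda>a x. if x \<in> rem (Suc j) then b x else a x)"
  define T where "T = surviving_children v j b"
  have disj: "rem (Suc j) \<inter> ls j = {}" by (auto simp: layer_set_def)
  have agree_upper: "mg a x = b x" if "x \<in> rem (Suc j)" for a x using that unfolding mg_def by simp
  have agree_layer: "mg a x = a x" if "x \<in> ls j" for a x using that disj unfolding mg_def by auto
  have T_sub: "T \<subseteq> ls j" unfolding T_def by (rule surviving_children_sub)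
  have "surviving_children v j (mg a) = T" for a
    using mis_removed_from_local[of "Suc j" "mg a" b] agree_upper
    unfolding surviving_children_def T_def by simp
  moreover have "proposed (mg a) u \<longleftrightarrow> a u \<and> (\<forall>x\<in>nbrs E u \<inter> ls j. \<not> a x)" if "u \<in> T" for a u
    using proposed_local[of u j "mg a" a] that T_sub agree_layer by auto
  ultimately have layer_weight_mg: "layer_weight v j (mg a) = (if \<forall>u\<in>T. \<not> (a u \<and> (\<forall>x\<in>nbrs E u \<inter> ls j. \<not> a x))
      then ennreal (exp (decay_rate * real (card T))) else 0)" for a
    unfolding layer_weight_def by simp
  have weight_mg: "weight v j (mg a) = layer_weight v j (mg a) * weight v (Suc j) b" for a
    using weight_Suc[OF jL] weight_local[of "Suc j" "mg a" b] agree_upper by simp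
  have "(\<integral>\<^sup>+a. weight v j (mg a) \<partial>Pi_pmf (ls j) False (\<lambda>_. bernoulli_pmf (1 / d\<^sup>2)))
      = (\<integral>\<^sup>+a. (if \<forall>u\<in>T. \<not> (a u \<and> (\<forall>x\<in>nbrs E u \<inter> ls j. \<not> a x))
            then ennreal (exp (decay_rate * real (card T))) else 0)
          \<partial>Pi_pmf (ls j) False (\<lambda>_. bernoulli_pmf (1 / d\<^sup>2))) * weight v (Suc j) b"
    unfolding weight_mg layer_weight_mg by (rule nn_integral_multc) simp
  also have "\<dots> \<le> weight v (Suc j) b"
    using mult_right_mono[OF nn_integral_layer_weight_le[OF d4 T_sub]] by fastforce
  finally show ?thesis unfolding mg_def .
qed

lemma nn_integral_weight_le:
  assumes d4: "d \<ge> 4"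
  shows "j \<le> L \<Longrightarrow> (\<integral>\<^sup>+mk. weight v j mk \<partial>Pi_pmf (rem j) False (\<lambda>_. bernoulli_pmf (1 / d\<^sup>2))) \<le> 1"
proof (induction "L - j" arbitrary: j)
  case 0
  then show ?case using rem_L by (simp add: weight_def)
next
  case (Suc k)
  define B where "B = (\<lambda>_::nat. bernoulli_pmf (1 / d\<^sup>2))"
  have jL: "j < L" using Suc.hyps(2) by simp
  have rem_j: "rem j = rem (Suc j) \<union> ls j" using rem_Suc[of j] ls_sub[of j] by auto
  have "rem (Suc j) \<inter> ls j = {}" by (auto simp: layer_set_def)
  then have split: "Pi_pmf (rem j) False B = map_pmf (\<lambda>(b, a) x. if x \<in> rem (Suc j) then b x else a x)
      (pair_pmf (Pi_pmf (rem (Suc j)) False B) (Pi_pmf (ls j) False B))"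
    unfolding rem_j by (rule Pi_pmf_union[OF finite_rem finite_ls])
  have "(\<integral>\<^sup>+mk. weight v j mk \<partial>Pi_pmf (rem j) False B)
      = (\<integral>\<^sup>+b. \<integral>\<^sup>+a. weight v j (\<lambda>x. if x \<in> rem (Suc j) then b x else a x) \<partial>Pi_pmf (ls j) False B
          \<partial>Pi_pmf (rem (Suc j)) False B)"
    unfolding split by (simp add: nn_integral_pair_pmf' case_prod_unfold)
  also have "\<dots> \<le> (\<integral>\<^sup>+b. weight v (Suc j) b \<partial>Pi_pmf (rem (Suc j)) False B)"
    unfolding B_def by (intro nn_integral_mono nn_integral_weight_step_le[OF d4 jL])
  also have "\<dots> \<le> 1"
    unfolding B_def using Suc.hyps(1)[of "Suc j"] Suc.hyps(2) jL by simp
  finally show ?case unfolding B_def .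
qed

lemma surviving_child_unproposed:
  assumes v: "v < n" and nv: "v \<notin> mis_removed_from mk 0" and u: "u \<in> surviving_children v l mk"
  shows "\<not> proposed mk u"
proof
  assume pu: "proposed mk u"
  have uc: "u \<in> children n E d v" and lu: "lay u = l" and nR: "u \<notin> mis_removed_from mk (Suc l)"
    using u unfolding surviving_children_def by auto
  have un: "u < n" using children_lt[OF uc] .
  have lL: "l < L" using in_ls_lay[OF un] lu by simp
  have vu: "v \<in> nbrs E u" using uc children_sub nbrs_sym by blast
  have "v \<in> mis_removed_from mk l"
    unfolding mis_removed_from_Suc[OF lL] mis_step_def Let_def using un lu pu nR vu by blast
  then show False using nv mis_removed_from_antimono[of 0 l mk] by auto
qed

lemma surviving_children_cover:
  "{u \<in> children n E d v. u \<notin> mis_removed_from mk 0} \<subseteq> (\<Union>l\<in>{0..<L}. surviving_children v l mk)"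
proof
  fix u assume u: "u \<in> {u \<in> children n E d v. u \<notin> mis_removed_from mk 0}"
  then have "u \<notin> mis_removed_from mk (Suc (lay u))"
    using mis_removed_from_antimono[of 0 "Suc (lay u)" mk] by auto
  moreover have "lay u < L" using in_ls_lay children_lt u by blast
  ultimately show "u \<in> (\<Union>l\<in>{0..<L}. surviving_children v l mk)"
    using u unfolding surviving_children_def by auto
qed

lemma decay_rate_nonneg: "d \<ge> 0 \<Longrightarrow> decay_rate \<ge> 0"
  unfolding decay_rate_def by simp

lemma weight_ge_if_unremoved:
  assumes d0: "d \<ge> 0" and v: "v < n" and nv: "v \<notin> mis_removed_from mk 0"
  shows "ennreal (exp (decay_rate * real (card {u \<in> children n E d v. u \<notin> mis_removed_from mk 0})))
    \<le> weight v 0 mk"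
proof -
  define s where "s = (\<Sum>l\<in>{0..<L}. real (card (surviving_children v l mk)))"
  have "card {u \<in> children n E d v. u \<notin> mis_removed_from mk 0}
      \<le> card (\<Union>l\<in>{0..<L}. surviving_children v l mk)"
    by (rule card_mono[OF _ surviving_children_cover]) simp
  also have "\<dots> \<le> (\<Sum>l\<in>{0..<L}. card (surviving_children v l mk))" by (rule card_UN_le) simp
  finally have "real (card {u \<in> children n E d v. u \<notin> mis_removed_from mk 0}) \<le> s"
    unfolding s_def by (metis of_nat_mono of_nat_sum)
  then have "exp (decay_rate * real (card {u \<in> children n E d v. u \<notin> mis_removed_from mk 0}))
      \<le> exp (decay_rate * s)"
    using decay_rate_nonneg[OF d0] by (simp add: mult_left_mono)
  moreover have "weight v 0 mk = ennreal (exp (decay_rate * s))"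
    using surviving_child_unproposed[OF v nv]
    by (simp add: weight_def layer_weight_def s_def prod_ennreal exp_sum sum_distrib_left)
  ultimately show ?thesis by (simp add: ennreal_leI)
qed

lemma decay_rate_mult_ge: "d \<ge> 4 \<Longrightarrow> d / 4 \<le> decay_rate * d ^ 4"
proof -
  assume d4: "d \<ge> 4"
  have "1 / X / Y * (X * X) = X / Y" if "X \<noteq> 0" for X Y :: real
    using that by (cases "Y = 0") (simp_all add: field_simps)
  then have "decay_rate * d ^ 4 = d\<^sup>2 / (2 * (d + 1))"
    unfolding decay_rate_def using d4 by (simp add: eval_nat_numeral)
  moreover have "d * (2 * (d + 1)) \<le> 4 * d\<^sup>2" using d4 by (simp add: power2_eq_square algebra_simps)
  then have "d / 4 \<le> d\<^sup>2 / (2 * (d + 1))" using d4 by (simp add: field_simps)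
  ultimately show ?thesis by simp
qed

lemma prob_mis_fail_le:
  assumes d4: "d \<ge> 4" and v: "v < n"
  shows "measure_pmf.prob (mis_mark_pmf n (1 / d\<^sup>2)) {mk. v \<notin> mis_removed n E d mk
      \<and> d ^ 4 < real (card {u \<in> children n E d v. u \<notin> mis_removed n E d mk})} \<le> exp (- d / 4)"
proof -
  define Fail where "Fail = {mk. v \<notin> mis_removed n E d mk
      \<and> d ^ 4 < real (card {u \<in> children n E d v. u \<notin> mis_removed n E d mk})}"
  define M where "M = mis_mark_pmf n (1 / d\<^sup>2)"
  define w where "w = exp (decay_rate * d ^ 4)"
  have markov: "indicator Fail mk * ennreal w \<le> weight v 0 mk" for mk
  proof (cases "mk \<in> Fail")
    case True
    then have unremoved: "v \<notin> mis_removed_from mk 0"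
      and "d ^ 4 < real (card {u \<in> children n E d v. u \<notin> mis_removed_from mk 0})"
      unfolding Fail_def mis_removed_eq by auto
    then have "w \<le> exp (decay_rate * real (card {u \<in> children n E d v. u \<notin> mis_removed_from mk 0}))"
      unfolding w_def using decay_rate_nonneg d4 by (simp add: mult_left_mono)
    then have "ennreal w \<le> ennreal (exp (decay_rate * real (card {u \<in> children n E d v. u \<notin> mis_removed_from mk 0})))"
      by (rule ennreal_leI)
    also have "\<dots> \<le> weight v 0 mk"
      by (rule weight_ge_if_unremoved[OF _ v unremoved]) (use d4 in simp)
    finally have "ennreal w \<le> weight v 0 mk" .
    then show ?thesis using True by simp
  qed simp
  have "emeasure M Fail * ennreal w = (\<integral>\<^sup>+mk. indicator Fail mk * ennreal w \<partial>M)"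
    by (simp add: nn_integral_multc)
  also have "\<dots> \<le> (\<integral>\<^sup>+mk. weight v 0 mk \<partial>M)" by (intro nn_integral_mono markov)
  also have "\<dots> \<le> 1"
    unfolding M_def mis_mark_pmf_def using nn_integral_weight_le[OF d4, of 0] by simp
  finally have "measure_pmf.prob M Fail * w \<le> 1"
    unfolding w_def by (simp add: measure_pmf.emeasure_eq_measure ennreal_mult[symmetric] ennreal_le_1)
  then have "measure_pmf.prob M Fail \<le> exp (- (decay_rate * d ^ 4))"
    unfolding w_def by (simp add: exp_minus field_simps)
  also have "\<dots> \<le> exp (- d / 4)" using decay_rate_mult_ge[OF d4] by simp
  finally show ?thesis unfolding M_def Fail_def .
qed

lemma prob_mis_good:
  assumes d4: "d \<ge> 4"
  shows "1 - real n * exp (- d / 4)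
    \<le> measure_pmf.prob (map_pmf (mis_removed n E d) (mis_mark_pmf n (1 / d\<^sup>2))) {R. good_removal n E d R}"
proof -
  define Fail where "Fail v = {mk. v \<notin> mis_removed n E d mk
      \<and> d ^ 4 < real (card {u \<in> children n E d v. u \<notin> mis_removed n E d mk})}" for v
  have "1 - real n * exp (- d / 4) \<le> measure_pmf.prob (mis_mark_pmf n (1 / d\<^sup>2)) (- (\<Union>v\<in>{..<n}. Fail v))"
    using prob_compl_union_ge[of "{..<n}" "mis_mark_pmf n (1 / d\<^sup>2)" Fail] prob_mis_fail_le[OF d4]
    unfolding Fail_def by simp
  also have "\<dots> \<le> measure_pmf.prob (mis_mark_pmf n (1 / d\<^sup>2)) (mis_removed n E d -` {R. good_removal n E d R})"
    by (rule measure_pmf.finite_measure_mono) (auto simp: Fail_def good_removal_def not_less)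
  finally show ?thesis by simp
qed

end

section \<open>The parameter d\<close>

lemma powr_tenth_ge:
  fixes K M D :: real
  assumes K: "K > 0" and M: "M > 0" and D: "D \<ge> K * M ^ 20"
  shows "D powr (1/10) \<ge> K powr (1/10) * M ^ 2"
proof -
  have "(K * M ^ 20) powr (1/10) \<le> D powr (1/10)"
    using D K M by (intro powr_mono2) simp_all
  moreover have "(K * M ^ 20) powr (1/10) = K powr (1/10) * (M ^ 20) powr (1/10)"
    using K M by (simp add: powr_mult)
  moreover have "(M ^ 20) powr (1/10) = M ^ 2"
  proof -
    have "(M ^ 20) powr (1/10) = (M powr 20) powr (1/10)" using M by (simp add: powr_realpow)
    also have "\<dots> = M powr 2" by (simp add: powr_powr)
    also have "\<dots> = M ^ 2" using M by (simp add: powr_realpow)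
    finally show ?thesis .
  qed
  ultimately show ?thesis by simp
qed

lemma union_bound_le_powr:
  fixes n :: nat and c d :: real
  assumes n: "n \<ge> 1" and dd: "4 * (c + 1) * ln (real n) \<le> d"
  shows "real n * exp (- d / 4) \<le> real n powr (- c)"
proof -
  have npos: "real n > 0" using n by simp
  have "- d / 4 \<le> - ((c + 1) * ln (real n))" using dd by (simp add: algebra_simps)
  then have "exp (- d / 4) \<le> exp (- ((c + 1) * ln (real n)))" by simp
  also have "\<dots> = real n powr (- (c + 1))" using npos by (simp add: powr_def algebra_simps)
  finally have "real n * exp (- d / 4) \<le> real n * real n powr (- (c + 1))"
    using npos by (intro mult_left_mono) simp_all
  also have "\<dots> = real n powr 1 * real n powr (- (c + 1))" using npos by simp
  also have "\<dots> = real n powr (1 + - (c + 1))" by (rule powr_add[symmetric])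
  also have "\<dots> = real n powr (- c)" by simp
  finally show ?thesis .
qed

lemma exp_neg_cube_le: "1 \<le> (d::real) \<Longrightarrow> exp (- (d ^ 3)) \<le> exp (- d / 4)"
proof -
  assume d: "1 \<le> d"
  then have "d * 1 \<le> d * (d * d)" using mult_mono[of 1 d 1 d] by (intro mult_left_mono) simp_all
  then show ?thesis using d by (simp add: power3_eq_cube)
qed

text \<open>Since d \<ge> K^(1/10) * M^2 with M = max \<lambda> (ln n), d dominates both 2\<lambda> and any
  multiple of ln n once ln n is large.\<close>

lemma dpar_large:
  fixes c K :: real
  assumes c: "c \<ge> 1" and K: "K > 0"
  obtains n0 where "\<And>n E. n \<ge> n0 \<Longrightarrow>
      real (max_degree n E) \<ge> K * (max (real (arboricity E)) (ln (real n))) ^ 20 \<Longrightarrow>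
      n \<ge> 1 \<and> 4 \<le> dpar n E \<and> 4 * (c + 1) * ln (real n) \<le> dpar n E \<and> 2 * real (arboricity E) \<le> dpar n E"
proof
  define k where "k = K powr (1/10)"
  have k: "k > 0" unfolding k_def using K by simp
  define A where "A = max (4 * (c + 1) / k) (max (2 / k) 1)"
  fix n E
  assume n: "nat \<lceil>exp A\<rceil> \<le> n"
    and Delta: "real (max_degree n E) \<ge> K * (max (real (arboricity E)) (ln (real n))) ^ 20"
  define M where "M = max (real (arboricity E)) (ln (real n))"
  have "exp A \<le> real n" using n by linarith
  moreover have "real n > 0" using calculation exp_gt_zero[of A] by linarith
  ultimately have A_ln: "A \<le> ln (real n)" by (metis exp_le_cancel_iff exp_ln)
  then have M: "A \<le> M" "1 \<le> ln (real n)" unfolding M_def A_def by auto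
  have kM: "4 * (c + 1) \<le> k * M" "2 \<le> k * M"
    using M(1) k unfolding A_def by (simp_all add: pos_divide_le_eq mult.commute)
  have d: "k * M * M \<le> dpar n E"
    using powr_tenth_ge[OF K _ Delta] M unfolding dpar_def k_def M_def A_def
    by (simp add: power2_eq_square mult.assoc)
  have d_ln: "4 * (c + 1) * ln (real n) \<le> dpar n E"
    using mult_mono[OF kM(1), of "ln (real n)" M] M c k d by (auto simp: M_def)
  have "2 * real (arboricity E) \<le> dpar n E"
    using mult_mono[OF kM(2), of "real (arboricity E)" M] M k d by (auto simp: M_def)
  moreover have "(4::real) \<le> 4 * (c + 1) * ln (real n)"
    using M(2) c mult_mono[of 4 "4 * (c + 1)" 1 "ln (real n)"] by simp
  moreover have "n \<ge> 1" using M(2) by (cases n) auto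
  ultimately show "n \<ge> 1 \<and> 4 \<le> dpar n E \<and> 4 * (c + 1) * ln (real n) \<le> dpar n E
      \<and> 2 * real (arboricity E) \<le> dpar n E"
    using d_ln by linarith
qed

theorem lemma3:
  fixes c K :: real and f :: "nat \<Rightarrow> real"
  assumes "c \<ge> 1" and "K > 0"
    and "\<forall>\<epsilon>>0. f \<in> o(\<lambda>n. real n powr \<epsilon>)"
  shows "\<exists>n0. \<forall>n E. n \<ge> n0 \<and> graph n E
      \<and> real (arboricity E) \<le> f n
      \<and> real (max_degree n E) \<ge> K * (max (real (arboricity E)) (ln (real n))) ^ 20
      \<longrightarrow> measure_pmf.prob (alg_match n E) {R. good_outcome n E R} \<ge> 1 - real n powr (- c)
        \<and> measure_pmf.prob (alg_mis n E) {R. good_outcome n E R} \<ge> 1 - real n powr (- c)"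
proof -
  obtain n0 where n0: "\<And>n E. n \<ge> n0 \<Longrightarrow>
      real (max_degree n E) \<ge> K * (max (real (arboricity E)) (ln (real n))) ^ 20 \<Longrightarrow>
      n \<ge> 1 \<and> 4 \<le> dpar n E \<and> 4 * (c + 1) * ln (real n) \<le> dpar n E \<and> 2 * real (arboricity E) \<le> dpar n E"
    using dpar_large[OF assms(1,2)] by blast
  show ?thesis
  proof (intro exI[of _ n0] allI impI, elim conjE)
    fix n E
    assume "n0 \<le> n" "graph n E"
      and "K * (max (real (arboricity E)) (ln (real n))) ^ 20 \<le> real (max_degree n E)"
    then have n: "n \<ge> 1" and d4: "4 \<le> dpar n E" and d: "4 * (c + 1) * ln (real n) \<le> dpar n E"
      and arb: "2 * real (arboricity E) \<le> dpar n E" using n0 by blast+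
    interpret peeling n E "dpar n E" by (rule peeling_if_arboricity_le) fact+
    have union_bound: "real n * exp (- dpar n E / 4) \<le> real n powr (- c)"
      using union_bound_le_powr[OF n d] .
    have "real n * exp (- (dpar n E ^ 3)) \<le> real n * exp (- dpar n E / 4)"
      using exp_neg_cube_le d4 by (intro mult_left_mono) auto
    then have "1 - real n powr (- c) \<le> measure_pmf.prob (alg_match n E) {R. good_outcome n E R}"
      using prob_match_good d4 union_bound unfolding alg_match_def Let_def good_outcome_eq by simp
    moreover have "1 - real n powr (- c) \<le> measure_pmf.prob (alg_mis n E) {R. good_outcome n E R}"
      using prob_mis_good d4 union_bound unfolding alg_mis_def Let_def good_outcome_eq by simp
    ultimately show "1 - real n powr (- c) \<le> measure_pmf.prob (alg_match n E) {R. good_outcome n E R}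
        \<and> 1 - real n powr (- c) \<le> measure_pmf.prob (alg_mis n E) {R. good_outcome n E R}" ..
  qed
qed

end
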